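(* With notation as in the context: (a) the $\frac{n(n-1)}2$ elements $\mathcal F_{j,r}$, $1\le j\le h$, $r\in\mathbb Z_n$, form a $\mathbb C$-basis of the Jacobson radical $\mathcal J$ of $G_0^{\mathbb C}(D_n)$, and $\mathcal J^2=0$; (b) for each $r$, $\xi_r^{-1}\mathcal F_{0,r}$ is an idempotent, where $\xi_r=\prod_{j=1}^h(2q^r-\lambda_{j,r})^2\ne0$; for each $1\le j\le h$, $r\in\mathbb Z_n$, there is $\nu_{j,r}\in\mathbb C$ with $\mathcal G_{j,r}^2=\vartheta_{j,r}\mathcal G_{j,r}+\nu_{j,r}\mathcal F_{j,r}$, where $\vartheta_{j,r}=(\lambda_{j,r}-\lambda_{0,r})\prod_{k=1,k\ne j}^h(\lambda_{j,r}-\lambda_{k,r})^2\ne0$, and then $\mathcal G'_{j,r}=\vartheta_{j,r}^{-1}(\mathcal G_{j,r}-\tfrac{\nu_{j,r}}{\vartheta_{j,r}}\mathcal F_{j,r})$ is an idempotent; the $\frac{n(n+1)}2$ idempotents $\xi_r^{-1}\mathcal F_{0,r}$, $\mathcal G'_{j,r}$ are pairwise orthogonal and their images form a basis of $G_0^{\mathbb C}(D_n)/\mathcal J$; (c) if $\mathsf f_{j,r}$, $\mathsf g_{j,r}$ denote the coordinate row vectors of $\mathcal F_{j,r}$, $\mathcal G_{j,r}$ in the basis of classes of simple modules (lexicographic order), then $\mathsf f_{j,r}M=\lambda_{j,r}\mathsf f_{j,r}$ for $0\le j\le h$ and $\mathsf g_{j,r}M=\lambda_{j,r}\mathsf g_{j,r}+\mathsf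 f_{j,r}$ for $1\le j\le h$, where $M$ is the McKay matrix of $V(2,0)$; these give complete sets of left eigenvectors and generalized left eigenvectors of $M$.
   Context: $n=2h+1\ge3$, $q\in\mathbb C$ a primitive $n$-th root of unity, $D_n$ the Drinfeld double of the Taft algebra with simple modules $V(\ell,r)$, $1\le\ell\le n$, $r\in\mathbb Z_n$ ($\dim V(\ell,r)=\ell$), ordered lexicographically. $G_0^{\mathbb C}(D_n)=\mathbb C\otimes_{\mathbb Z}G_0(D_n)$ is the Grothendieck algebra (product from $\otimes$), with basis the classes $[V(\ell,r)]$. Known facts: with $g=[V(1,1)]$, $x=[V(2,0)]$, $G_0^{\mathbb C}(D_n)$ is commutative and $\cong\mathbb C[g,x]/(g^n-1,f(x,g))$ where $f(x,g)=\sum_{i=0}^{h}(-1)^i\frac{n}{n-i}\binom{n-i}{i}g^ix^{n-2i}-2$; moreover $[V(\ell,s)]=g^s\sum_{i=0}^{\lfloor(\ell-1)/2\rfloor}(-1)^i\binom{\ell-1-i}{i}g^ix^{\ell-1-2i}$. Let $\lambda_{j,r}=q^r(q^j+q^{-j})$; then $f(x,q^{2r})=(x-\lambda_{0,r})\prod_{j=1}^h(x-\lambda_{j,r})^2$ as a polynomial in $x$. For $u\in\mathbb Z_n$, $\mathcal E_u=\frac1n\sum_{v=0}^{n-1}q^{-uv}g^v$. Define $\mathcal F_{j,r}=\frac{f(x,q^{2r})}{x-\lambda_{j,r}}\mathcal E_{2r}$ for $0\le j\le h$ and $\mathcal G_{j,r}=\frac{f(x,q^{2r})}{(x-\lambda_{j,r})^2}\mathcal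 E_{2r}$ for $1\le j\le h$ (quotients taken in $\mathbb C[x]$). The McKay matrix $M$ of $V(2,0)$ has $((\ell,r),(\ell',s))$ entry $[V(\ell,r)\otimes V(2,0):V(\ell',s)]$. *)

theory Defs
  imports "HOL-Computational_Algebra.Polynomial"
begin

text \<open>Model of G_0^C(D_n) = C[g,x]/(g^n - 1, f(x,g)).
  Elements are represented by bivariate polynomials of type complex poly poly:
  the outer variable is x, the coefficients are polynomials in g.
  Equality in the algebra is congruence modulo the ideal (g^n - 1, f(x,g)).\<close>

definition hh :: "nat \<Rightarrow> nat" where "hh n = (n - 1) div 2"

definition gpoly :: "complex poly \<Rightarrow> complex poly poly" where
  "gpoly p = [:p:]"

definition xpoly :: "complex poly \<Rightarrow> complex poly poly" where
  "xpoly p = map_poly (\<lambda>c. [:c:]) p"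

definition Gv :: "complex poly poly" where "Gv = gpoly (monom 1 1)"
definition Xv :: "complex poly poly" where "Xv = monom 1 1"

definition sc :: "complex \<Rightarrow> complex poly poly \<Rightarrow> complex poly poly" where
  "sc c P = smult [:c:] P"

definition fpol :: "nat \<Rightarrow> complex poly poly" where
  "fpol n = (\<Sum>i\<in>{0..hh n}. monom (monom ((-1)^i * of_nat n / of_nat (n - i)
              * of_nat ((n - i) choose i)) i) (n - 2*i)) - 2"

definition fx :: "nat \<Rightarrow> complex \<Rightarrow> complex poly" where
  "fx n z = map_poly (\<lambda>c. poly c z) (fpol n)"

definition congI :: "nat \<Rightarrow> complex poly poly \<Rightarrow> complex poly poly \<Rightarrow> bool" where
  "congI n P Q \<longleftrightarrow> (\<exists>A B. P - Q = A * gpoly (monom 1 n - 1) + B * fpol n)"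

text \<open>Ideals of the quotient algebra, as saturated sets of representatives.\<close>
definition A_ideal :: "nat \<Rightarrow> complex poly poly set \<Rightarrow> bool" where
  "A_ideal n S \<longleftrightarrow> 0 \<in> S \<and> (\<forall>P\<in>S. \<forall>Q\<in>S. P + Q \<in> S) \<and> (\<forall>P\<in>S. \<forall>R. R * P \<in> S)
     \<and> (\<forall>P\<in>S. \<forall>Q. congI n P Q \<longrightarrow> Q \<in> S)"

definition A_maximal :: "nat \<Rightarrow> complex poly poly set \<Rightarrow> bool" where
  "A_maximal n S \<longleftrightarrow> A_ideal n S \<and> 1 \<notin> S \<and>
     (\<forall>T. A_ideal n T \<and> S \<subseteq> T \<longrightarrow> T = S \<or> 1 \<in> T)"

definition jac :: "nat \<Rightarrow> complex poly poly set" where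
  "jac n = {P. \<forall>S. A_maximal n S \<longrightarrow> P \<in> S}"

definition idempotentA :: "nat \<Rightarrow> complex poly poly \<Rightarrow> bool" where
  "idempotentA n P \<longleftrightarrow> congI n (P * P) P"

definition lam :: "complex \<Rightarrow> nat \<Rightarrow> nat \<Rightarrow> complex" where
  "lam q j r = q ^ r * (q ^ j + inverse (q ^ j))"

definition Eu :: "nat \<Rightarrow> complex \<Rightarrow> nat \<Rightarrow> complex poly poly" where
  "Eu n q u = gpoly (\<Sum>v<n. monom (inverse (of_nat n) * inverse (q ^ (u * v))) v)"

definition Fc :: "nat \<Rightarrow> complex \<Rightarrow> nat \<Rightarrow> nat \<Rightarrow> complex poly poly" where
  "Fc n q j r = xpoly (fx n (q ^ (2*r)) div [:- lam q j r, 1:]) * Eu n q (2*r)"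

definition Gc :: "nat \<Rightarrow> complex \<Rightarrow> nat \<Rightarrow> nat \<Rightarrow> complex poly poly" where
  "Gc n q j r = xpoly (fx n (q ^ (2*r)) div ([:- lam q j r, 1:] ^ 2)) * Eu n q (2*r)"

definition xi :: "nat \<Rightarrow> complex \<Rightarrow> nat \<Rightarrow> complex" where
  "xi n q r = (\<Prod>j\<in>{1..hh n}. (2 * q ^ r - lam q j r) ^ 2)"

definition theta :: "nat \<Rightarrow> complex \<Rightarrow> nat \<Rightarrow> nat \<Rightarrow> complex" where
  "theta n q j r = (lam q j r - lam q 0 r) * (\<Prod>k\<in>{1..hh n} - {j}. (lam q j r - lam q k r) ^ 2)"

definition nu :: "nat \<Rightarrow> complex \<Rightarrow> nat \<Rightarrow> nat \<Rightarrow> complex" where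
  "nu n q j r = (SOME v. congI n (Gc n q j r * Gc n q j r)
                    (sc (theta n q j r) (Gc n q j r) + sc v (Fc n q j r)))"

definition Gp :: "nat \<Rightarrow> complex \<Rightarrow> nat \<Rightarrow> nat \<Rightarrow> complex poly poly" where
  "Gp n q j r = sc (inverse (theta n q j r))
       (Gc n q j r - sc (nu n q j r / theta n q j r) (Fc n q j r))"

definition Eid :: "nat \<Rightarrow> complex \<Rightarrow> nat \<Rightarrow> nat \<Rightarrow> complex poly poly" where
  "Eid n q j r = (if j = 0 then sc (inverse (xi n q r)) (Fc n q 0 r) else Gp n q j r)"

definition Vcls :: "nat \<Rightarrow> nat \<Rightarrow> complex poly poly" where
  "Vcls l s = Gv ^ s * (\<Sum>i\<in>{0..(l - 1) div 2}.
       sc ((-1) ^ i * of_nat ((l - 1 - i) choose i)) (Gv ^ i * Xv ^ (l - 1 - 2*i)))"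

definition idxV :: "nat \<Rightarrow> (nat \<times> nat) set" where
  "idxV n = {1..n} \<times> {0..<n}"

definition coord :: "nat \<Rightarrow> complex poly poly \<Rightarrow> nat \<times> nat \<Rightarrow> complex" where
  "coord n P = (THE c. (\<forall>k. k \<notin> idxV n \<longrightarrow> c k = 0) \<and>
        congI n P (\<Sum>k\<in>idxV n. sc (c k) (Vcls (fst k) (snd k))))"

text \<open>McKay matrix of V(2,0): entry ((l,r),(l',s)) = [V(l,r) (x) V(2,0) : V(l',s)],
  i.e. the coefficient of [V(l',s)] in [V(l,r)] * x.\<close>
definition McKay :: "nat \<Rightarrow> nat \<times> nat \<Rightarrow> nat \<times> nat \<Rightarrow> complex" where
  "McKay n k k' = coord n (Vcls (fst k) (snd k) * Xv) k'"

definition vecmat :: "nat \<Rightarrow> (nat \<times> nat \<Rightarrow> complex) \<Rightarrow> (nat \<times> nat \<Rightarrow> nat \<times> nat \<Rightarrow> complex)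
    \<Rightarrow> nat \<times> nat \<Rightarrow> complex" where
  "vecmat n w M k' = (\<Sum>k\<in>idxV n. w k * M k k')"

end

theory Submission
  imports Defs
begin

text \<open>Since n is odd, the roots of g^n - 1 are the q^(2r), r \<in> Z_n, and the idempotents E_(2r)
  split the algebra into the product of the local algebras C[x]/(f_r), f_r = f(x, q^(2r)):
  two representatives are congruent iff all their specialisations g := q^(2r) are congruent
  modulo f_r. A Dickson-polynomial identity, f(y(t + 1/t), y^2) = t^n + t^(-n) - 2, yields
  f_r = (x - \<lambda>_(0,r)) \<Prod>_j (x - \<lambda>_(j,r))^2 with pairwise distinct \<lambda>'s. The rest is
  arithmetic of one-variable polynomials modulo f_r: the maximal ideals are the evaluations
  at the points \<lambda>_(k,r), so the radical consists of the elements all of whose components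
  vanish there, and F_(j,r), G_(j,r) become cofactors of f_r whose products and values are
  read off from the factorisation. Coordinates in the basis of simple modules exist and are
  unique because the components of the classes [V(l,s)] are triangular in x (degree l - 1)
  and the characters of Z_n are linearly independent.\<close>

section \<open>Specialising the variable g\<close>

lemma map_poly_add_hom:
  assumes "f 0 = 0" "\<And>a b. f (a + b) = f a + f b"
  shows "map_poly f (p + q) = map_poly f p + map_poly f q"
  by (intro poly_eqI) (simp add: coeff_map_poly assms)

lemma map_poly_mult_hom:
  fixes f :: "'a::comm_ring_1 \<Rightarrow> 'b::comm_ring_1"
  assumes "f 0 = 0" "\<And>a b. f (a + b) = f a + f b" "\<And>a b. f (a * b) = f a * f b"
  shows "map_poly f (p * q) = map_poly f p * map_poly f q"
proof (induction p)
  case (pCons a p)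
  have "map_poly f (pCons a p * q) = map_poly f (smult a q + pCons 0 (p * q))" by simp
  also have "\<dots> = smult (f a) (map_poly f q) + pCons 0 (map_poly f p * map_poly f q)"
    by (simp add: map_poly_add_hom[OF assms(1,2)] map_poly_smult assms map_poly_pCons pCons.IH)
  also have "\<dots> = map_poly f (pCons a p) * map_poly f q" by (simp add: map_poly_pCons assms)
  finally show ?case .
qed simp

definition eval_g :: "complex \<Rightarrow> complex poly poly \<Rightarrow> complex poly" where
  "eval_g z P = map_poly (\<lambda>c. poly c z) P"

lemma eval_g_add [simp]: "eval_g z (P + Q) = eval_g z P + eval_g z Q"
  unfolding eval_g_def by (rule map_poly_add_hom) auto

lemma eval_g_mult [simp]: "eval_g z (P * Q) = eval_g z P * eval_g z Q"
  unfolding eval_g_def by (rule map_poly_mult_hom) auto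

lemma eval_g_0 [simp]: "eval_g z 0 = 0"
  and eval_g_1 [simp]: "eval_g z 1 = 1"
  by (simp_all add: eval_g_def)

lemma eval_g_uminus [simp]: "eval_g z (- P) = - eval_g z P"
  using eval_g_add[of z P "- P"] by (simp add: eq_neg_iff_add_eq_0 add.commute)

lemma eval_g_diff [simp]: "eval_g z (P - Q) = eval_g z P - eval_g z Q"
  using eval_g_add[of z P "- Q"] by simp

lemma eval_g_sum [simp]: "eval_g z (\<Sum>i\<in>A. f i) = (\<Sum>i\<in>A. eval_g z (f i))"
  by (induction A rule: infinite_finite_induct) auto

lemma eval_g_power [simp]: "eval_g z (P ^ k) = eval_g z P ^ k"
  by (induction k) auto

lemma eval_g_smult [simp]: "eval_g z (smult c P) = smult (poly c z) (eval_g z P)"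
  unfolding eval_g_def by (rule map_poly_smult) auto

lemma eval_g_sc [simp]: "eval_g z (sc c P) = smult c (eval_g z P)"
  by (simp add: sc_def)

lemma eval_g_gpoly [simp]: "eval_g z (gpoly p) = [:poly p z:]"
  by (simp add: eval_g_def gpoly_def map_poly_pCons)

lemma eval_g_xpoly [simp]: "eval_g z (xpoly p) = p"
  unfolding eval_g_def xpoly_def by (subst map_poly_map_poly) (auto simp: o_def)

lemma eval_g_Xv [simp]: "eval_g z Xv = [:0, 1:]"
  by (simp add: eval_g_def Xv_def map_poly_monom monom_Suc map_poly_pCons)

lemma eval_g_Gv [simp]: "eval_g z Gv = [:z:]"
  by (simp add: Gv_def monom_Suc)

lemma eval_g_monom [simp]: "eval_g z (monom c k) = monom (poly c z) k"
  by (simp add: eval_g_def map_poly_monom)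

lemma eval_g_numeral [simp]: "eval_g z (numeral k) = numeral k"
  by (induction k) (simp_all only: numeral.simps eval_g_add eval_g_1)

lemma eval_g_fpol: "eval_g z (fpol n) = fx n z"
  by (simp add: eval_g_def fx_def)

lemma xpoly_mult [simp]: "xpoly (p * q) = xpoly p * xpoly q"
  unfolding xpoly_def by (rule map_poly_mult_hom) auto

lemma const_poly_power: "[:z:] ^ i = [:z ^ i:]"
  by (induction i) (simp_all add: mult_to_poly mult.commute)

lemma gpoly_mult: "gpoly a * gpoly b = gpoly (a * b)"
  by (simp add: gpoly_def)

lemma sc_eq_gpoly_mult: "sc c P = gpoly [:c:] * P"
  by (simp add: sc_def gpoly_def)

lemma sc_0 [simp]: "sc 0 P = 0"
  by (simp add: sc_def)

lemma sc_sc: "sc a (sc b P) = sc (a * b) P"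
  by (simp add: sc_def mult.commute)

lemma sc_sum_right: "sc a (\<Sum>i\<in>S. f i) = (\<Sum>i\<in>S. sc a (f i))"
  by (induction S rule: infinite_finite_induct) (auto simp: sc_def smult_add_right)

lemma sc_sum_left: "(\<Sum>i\<in>S. sc (a i) P) = sc (\<Sum>i\<in>S. a i) P"
  by (simp add: sc_def smult_sum[symmetric] sum_to_poly)

lemma sc_add_left: "sc a P + sc b P = sc (a + b) P"
  by (simp add: sc_def smult_add_left[symmetric])

lemma sub_xpoly_eval_g: "P - xpoly (eval_g z P) = gpoly [:-z, 1:] * map_poly (\<lambda>c. synthetic_div c z) P"
proof (rule poly_eqI)
  fix k
  have "coeff P k - [:poly (coeff P k) z:] = [:-z, 1:] * synthetic_div (coeff P k) z"
    using synthetic_div_correct'[of z "coeff P k"] by (simp add: algebra_simps)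
  thus "coeff (P - xpoly (eval_g z P)) k = coeff (gpoly [:-z, 1:] * map_poly (\<lambda>c. synthetic_div c z) P) k"
    by (simp add: xpoly_def eval_g_def coeff_map_poly gpoly_def)
qed


lemma sum_powers_root_of_unity:
  fixes w :: complex
  assumes "w ^ n = 1"
  shows "(\<Sum>v<n. w ^ v) = (if w = 1 then of_nat n else 0)"
  using geometric_sum[of w n] assms by auto

lemma prod_linear_factors_dvd:
  fixes p :: "complex poly"
  assumes "finite S" "\<forall>a\<in>S. poly p a = 0"
  shows "(\<Prod>a\<in>S. [:-a, 1:]) dvd p"
  using assms
proof (induction S arbitrary: p rule: finite_induct)
  case (insert a S p)
  have "[:-a, 1:] dvd p" using insert.prems by (simp add: poly_eq_0_iff_dvd)
  then obtain p1 where p1: "p = [:-a, 1:] * p1" by (auto simp: dvd_def)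
  have "\<forall>b\<in>S. poly p1 b = 0"
  proof
    fix b assume b: "b \<in> S"
    have "poly p b = (b - a) * poly p1 b" by (simp add: p1 algebra_simps)
    moreover have "b \<noteq> a" using b insert.hyps by auto
    ultimately show "poly p1 b = 0" using insert.prems b by simp
  qed
  hence "(\<Prod>a\<in>S. [:-a, 1:]) dvd p1" by (rule insert.IH)
  hence "[:-a, 1:] * (\<Prod>a\<in>S. [:-a, 1:]) dvd [:-a, 1:] * p1" by (rule mult_dvd_mono[OF dvd_refl])
  thus ?case using insert.hyps by (simp add: p1)
qed simp

lemma monic_dvd_imp_eq:
  fixes p Q :: "complex poly"
  assumes "p dvd Q" "Q \<noteq> 0" "degree p = degree Q" "lead_coeff p = 1" "lead_coeff Q = 1"
  shows "p = Q"
proof -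
  obtain c where c: "Q = p * c" using assms(1) by (auto simp: dvd_def)
  have c0: "c \<noteq> 0" and p0: "p \<noteq> 0" using c assms(2) by auto
  have "degree c = 0" using c c0 p0 assms(3) by (simp add: degree_mult_eq)
  moreover have "lead_coeff c = 1" using c assms(4,5) by (simp add: lead_coeff_mult)
  ultimately have "c = 1"
    by (intro poly_eqI) (auto simp: coeff_eq_0 coeff_1 elim: degree_eq_zeroE)
  thus ?thesis using c by simp
qed

lemma monom_1_minus_1:
  assumes "k > 0"
  shows "degree (monom (1::complex) k - 1) = k" and "lead_coeff (monom (1::complex) k - 1) = 1"
    and "monom (1::complex) k - 1 \<noteq> 0"
proof -
  have c: "coeff (monom (1::complex) k - 1) k = 1" using assms by (simp add: coeff_monom)
  have "degree (monom (1::complex) k - 1) \<le> k"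
    by (rule order.trans[OF degree_diff_le_max]) (simp add: degree_monom_eq)
  moreover have "k \<le> degree (monom (1::complex) k - 1)" using c by (intro le_degree) simp
  ultimately show d: "degree (monom (1::complex) k - 1) = k" by simp
  show "lead_coeff (monom (1::complex) k - 1) = 1" using c d by simp
  show "monom (1::complex) k - 1 \<noteq> 0" using c by (metis coeff_0 zero_neq_one)
qed

lemma dvd_imp_eq_0_if_degree_less:
  fixes p f :: "complex poly"
  assumes "f dvd p" "f \<noteq> 0" "\<forall>k\<ge>degree f. coeff p k = 0"
  shows "p = 0"
proof (rule ccontr)
  assume p0: "p \<noteq> 0"
  hence "degree f \<le> degree p" using dvd_imp_degree_le[OF assms(1)] by simp
  hence "lead_coeff p = 0" using assms(3) by simp
  thus False using p0 by simp
qed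

definition triangular :: "nat \<Rightarrow> (nat \<Rightarrow> 'a::zero_neq_one poly) \<Rightarrow> bool" where
  "triangular N w \<longleftrightarrow> (\<forall>l\<in>{1..N}. coeff (w l) (l - 1) = 1 \<and> (\<forall>k\<ge>l. coeff (w l) k = 0))"

lemma triangular_lin_indep:
  fixes w :: "nat \<Rightarrow> complex poly"
  assumes "triangular N w" "(\<Sum>l\<in>{1..N}. smult (d l) (w l)) = 0"
  shows "\<forall>l\<in>{1..N}. d l = 0"
  using assms
proof (induction N)
  case (Suc N)
  have split: "(\<Sum>l\<in>{1..Suc N}. smult (d l) (w l)) = (\<Sum>l\<in>{1..N}. smult (d l) (w l)) + smult (d (Suc N)) (w (Suc N))"
    by (simp add: sum.cl_ivl_Suc)
  have "coeff (\<Sum>l\<in>{1..N}. smult (d l) (w l)) N = 0"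
    using Suc.prems(1) by (simp add: triangular_def coeff_sum)
  moreover have "coeff (w (Suc N)) N = 1"
    using Suc.prems(1) unfolding triangular_def by (metis atLeastAtMost_iff diff_Suc_1 le_add1 order_refl plus_1_eq_Suc)
  moreover have "coeff ((\<Sum>l\<in>{1..N}. smult (d l) (w l)) + smult (d (Suc N)) (w (Suc N))) N = 0"
    using Suc.prems(2) split by simp
  ultimately have dN: "d (Suc N) = 0" by simp
  have "triangular N w" using Suc.prems(1) by (simp add: triangular_def)
  hence "\<forall>l\<in>{1..N}. d l = 0" using Suc.IH Suc.prems(2) dN split by simp
  thus ?case using dN by (auto simp: le_Suc_eq)
qed simp

lemma triangular_span:
  fixes w :: "nat \<Rightarrow> complex poly"
  assumes "triangular N w" "\<forall>k\<ge>N. coeff p k = 0"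
  shows "\<exists>d. p = (\<Sum>l\<in>{1..N}. smult (d l) (w l))"
  using assms
proof (induction N arbitrary: p)
  case 0
  hence "p = 0" by (intro poly_eqI) simp
  thus ?case by simp
next
  case (Suc N)
  let ?c = "coeff p N"
  let ?p' = "p - smult ?c (w (Suc N))"
  have "\<forall>k\<ge>N. coeff ?p' k = 0"
  proof (intro allI impI)
    fix k assume "N \<le> k"
    with Suc.prems show "coeff ?p' k = 0"
      by (cases "k = N") (auto simp: triangular_def dest: bspec[of _ _ "Suc N"])
  qed
  moreover have "triangular N w" using Suc.prems(1) by (simp add: triangular_def)
  ultimately obtain d where d: "?p' = (\<Sum>l\<in>{1..N}. smult (d l) (w l))" using Suc.IH by blast
  have "(\<Sum>l\<in>{1..N}. smult ((d(Suc N := ?c)) l) (w l)) = (\<Sum>l\<in>{1..N}. smult (d l) (w l))"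
    by (rule sum.cong) auto
  hence "p = (\<Sum>l\<in>{1..Suc N}. smult ((d(Suc N := ?c)) l) (w l))"
    using d by (simp add: algebra_simps)
  thus ?case by blast
qed

lemma smult_diff_mult_smult_diff:
  fixes G1 F1 G2 F2 :: "complex poly"
  shows "smult a (G1 - smult b F1) * smult c (G2 - smult d F2)
     = smult (a * c) (G1 * G2) - smult (a * c * d) (G1 * F2) - smult (a * b * c) (F1 * G2)
       + smult (a * b * c * d) (F1 * F2)"
  by (rule poly_ext) (simp add: algebra_simps)

section \<open>Chebyshev polynomials\<close>

text \<open>cheb_U s m is the Chebyshev polynomial of the second kind U_m evaluated at s/2.\<close>

definition cheb_U_term :: "complex \<Rightarrow> nat \<Rightarrow> nat \<Rightarrow> complex" where
  "cheb_U_term s m i = (-1) ^ i * of_nat ((m - i) choose i) * s ^ (m - 2 * i)"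

definition cheb_U :: "complex \<Rightarrow> nat \<Rightarrow> complex" where
  "cheb_U s m = (\<Sum>i\<le>m. cheb_U_term s m i)"

lemma cheb_U_term_eq_0: "m < 2 * i \<Longrightarrow> cheb_U_term s m i = 0"
  by (simp add: cheb_U_term_def binomial_eq_0)

lemma cheb_U_term_Suc_Suc:
  "cheb_U_term s (Suc (Suc m)) (Suc i) = s * cheb_U_term s (Suc m) (Suc i) - cheb_U_term s m i"
proof (cases "2 * i + 1 \<le> m")
  case True
  then obtain p where p: "m - 2 * i = Suc p"
    by (metis Suc_diff_le Suc_eq_plus1 diff_Suc_Suc diff_zero le_add2 le_trans)
  have "Suc (Suc m) - Suc i = Suc (m - i)" "Suc (Suc m) - 2 * Suc i = Suc p"
    "Suc m - 2 * Suc i = p" using True p by simp_all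
  thus ?thesis using p unfolding cheb_U_term_def by (simp add: algebra_simps)
next
  case False
  have z: "(m - i) choose Suc i = 0" using False by (simp add: binomial_eq_0)
  have "cheb_U_term s (Suc m) (Suc i) = 0" by (simp add: cheb_U_term_def z)
  moreover have "cheb_U_term s (Suc (Suc m)) (Suc i) = - cheb_U_term s m i"
  proof (cases "i \<le> m")
    case True
    hence "Suc (Suc m) - Suc i = Suc (m - i)" by simp
    thus ?thesis unfolding cheb_U_term_def by (simp add: z)
  qed (simp add: cheb_U_term_def)
  ultimately show ?thesis by simp
qed

lemma cheb_U_Suc_Suc: "cheb_U s (Suc (Suc m)) = s * cheb_U s (Suc m) - cheb_U s m"
proof -
  have "cheb_U s (Suc (Suc m))
      = cheb_U_term s (Suc (Suc m)) 0 + (\<Sum>i\<le>Suc m. cheb_U_term s (Suc (Suc m)) (Suc i))"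
    unfolding cheb_U_def by (rule sum.atMost_Suc_shift)
  also have "\<dots> = s * (cheb_U_term s (Suc m) 0 + (\<Sum>i\<le>Suc m. cheb_U_term s (Suc m) (Suc i)))
      - (\<Sum>i\<le>Suc m. cheb_U_term s m i)"
    by (simp add: cheb_U_term_Suc_Suc sum_subtractf sum_distrib_left algebra_simps)
      (simp add: cheb_U_term_def)
  also have "cheb_U_term s (Suc m) 0 + (\<Sum>i\<le>Suc m. cheb_U_term s (Suc m) (Suc i))
      = (\<Sum>i\<le>Suc (Suc m). cheb_U_term s (Suc m) i)"
    by (rule sum.atMost_Suc_shift[symmetric])
  also have "\<dots> = cheb_U s (Suc m)" unfolding cheb_U_def by (simp add: cheb_U_term_eq_0)
  also have "(\<Sum>i\<le>Suc m. cheb_U_term s m i) = cheb_U s m"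
    unfolding cheb_U_def by (simp add: cheb_U_term_eq_0)
  finally show ?thesis .
qed

definition hom_sum :: "complex \<Rightarrow> complex \<Rightarrow> nat \<Rightarrow> complex" where
  "hom_sum a b m = (\<Sum>k\<le>m. a ^ (m - k) * b ^ k)"

lemma hom_sum_Suc_left: "hom_sum a b (Suc m) = a * hom_sum a b m + b ^ Suc m"
proof -
  have "(\<Sum>k\<le>m. a ^ (Suc m - k) * b ^ k) = a * hom_sum a b m"
    unfolding hom_sum_def sum_distrib_left by (rule sum.cong[OF refl]) (simp add: Suc_diff_le)
  thus ?thesis unfolding hom_sum_def by simp
qed

lemma hom_sum_Suc_right: "hom_sum a b (Suc m) = b * hom_sum a b m + a ^ Suc m"
proof -
  have "(\<Sum>k\<le>m. a ^ (Suc m - Suc k) * b ^ Suc k) = b * hom_sum a b m"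
    unfolding hom_sum_def sum_distrib_left by (rule sum.cong[OF refl]) simp
  thus ?thesis unfolding hom_sum_def by (subst sum.atMost_Suc_shift) simp
qed

lemma cheb_U_t_plus_inverse:
  assumes "t \<noteq> 0"
  shows "cheb_U (t + inverse t) m = hom_sum t (inverse t) m"
proof -
  have "cheb_U (t + inverse t) m = hom_sum t (inverse t) m
      \<and> cheb_U (t + inverse t) (Suc m) = hom_sum t (inverse t) (Suc m)"
  proof (induction m)
    case 0
    show ?case by (simp add: cheb_U_def cheb_U_term_def hom_sum_def)
  next
    case (Suc m)
    let ?b = "inverse t"
    have "hom_sum t ?b (Suc (Suc m)) = t * hom_sum t ?b (Suc m) + ?b * (hom_sum t ?b (Suc m) - t * hom_sum t ?b m)"
      using hom_sum_Suc_left[of t ?b "Suc m"] hom_sum_Suc_left[of t ?b m] by simp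
    also have "\<dots> = (t + ?b) * hom_sum t ?b (Suc m) - hom_sum t ?b m"
      using assms by (simp add: algebra_simps)
    finally show ?case using Suc by (simp add: cheb_U_Suc_Suc)
  qed
  thus ?thesis ..
qed

lemma hom_sum_Suc_Suc_diff:
  assumes "t \<noteq> 0"
  shows "hom_sum t (inverse t) (Suc (Suc m)) - hom_sum t (inverse t) m = t ^ Suc (Suc m) + inverse t ^ Suc (Suc m)"
  using assms hom_sum_Suc_right[of t "inverse t" "Suc m"] hom_sum_Suc_left[of t "inverse t" m]
  by (simp add: algebra_simps)

section \<open>The algebra as a product of local algebras\<close>

locale odd_root_of_unity =
  fixes n h :: nat and q :: complex
  assumes h_pos: "h \<ge> 1" and n_eq: "n = 2 * h + 1" and q_power_n: "q ^ n = 1"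
    and q_primitive: "\<forall>k. 0 < k \<and> k < n \<longrightarrow> q ^ k \<noteq> 1"
begin

lemma n_pos: "n > 0"
  using n_eq by simp

lemma q_nonzero: "q \<noteq> 0"
  using q_power_n n_pos by (metis power_0_left zero_neq_one not_gr0)

lemma hh_eq: "hh n = h"
  using n_eq by (simp add: hh_def)

lemma q_power_inj: assumes "a < n" "b < n" "q ^ a = q ^ b" shows "a = b"
proof -
  have False if ab: "a' < b'" "b' < n" "q ^ a' = q ^ b'" for a' b'
  proof -
    have "q ^ b' = q ^ a' * q ^ (b' - a')" using ab(1) by (simp flip: power_add)
    hence "q ^ (b' - a') = 1" using ab(3) q_nonzero by simp
    thus False using q_primitive ab(1,2) by simp
  qed
  thus ?thesis using assms by (metis linorder_neqE_nat)
qed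

lemma power_q_power_n [simp]: "(q ^ k) ^ n = 1"
  by (metis power_mult mult.commute power_one q_power_n)

text \<open>Because n is odd, r \<mapsto> q^(2r) is a bijection of Z_n onto the n-th roots of unity.\<close>

lemma q_double_power_inj: assumes "r < n" "r' < n" "q ^ (2 * r) = q ^ (2 * r')" shows "r = r'"
proof -
  have "(q ^ r) ^ 2 = (q ^ r') ^ 2" using assms(3) by (simp only: power_mult[symmetric] mult.commute)
  hence "q ^ r = q ^ r' \<or> q ^ r = - (q ^ r')" by (simp add: power2_eq_iff)
  moreover have "q ^ r \<noteq> - (q ^ r')"
  proof
    assume "q ^ r = - (q ^ r')"
    hence "(q ^ r) ^ n = - ((q ^ r') ^ n)" using n_eq by (simp add: power_minus_odd)
    thus False by simp
  qed
  ultimately show ?thesis using q_power_inj assms(1,2) by simp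
qed

lemma character_orthogonality: assumes "r < n" "r' < n"
  shows "inverse (of_nat n) * (\<Sum>v<n. (q ^ (2 * r') * inverse (q ^ (2 * r))) ^ v) = (if r' = r then 1 else 0)"
proof -
  let ?w = "q ^ (2 * r') * inverse (q ^ (2 * r))"
  have "?w ^ n = 1" by (simp add: power_mult_distrib power_inverse)
  moreover have "?w = 1 \<longleftrightarrow> r' = r"
    using q_double_power_inj[OF assms(2,1)] q_nonzero by (auto simp: field_simps)
  ultimately show ?thesis using sum_powers_root_of_unity n_pos by auto
qed

definition Eu_poly :: "nat \<Rightarrow> complex poly" where
  "Eu_poly u = (\<Sum>v<n. monom (inverse (of_nat n) * inverse (q ^ (u * v))) v)"

lemma Eu_eq: "Eu n q u = gpoly (Eu_poly u)"
  by (simp add: Eu_def Eu_poly_def)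

lemma poly_Eu_poly: "poly (Eu_poly u) x = inverse (of_nat n) * (\<Sum>v<n. (x * inverse (q ^ u)) ^ v)"
proof -
  have "poly (Eu_poly u) x = (\<Sum>v<n. inverse (of_nat n) * inverse (q ^ (u * v)) * x ^ v)"
    by (simp add: Eu_poly_def poly_sum poly_monom)
  also have "\<dots> = (\<Sum>v<n. inverse (of_nat n) * (x * inverse (q ^ u)) ^ v)"
    by (rule sum.cong[OF refl]) (simp add: power_mult_distrib power_inverse power_mult)
  finally show ?thesis by (simp add: sum_distrib_left)
qed

lemma eval_g_Eu: assumes "r < n" "r' < n"
  shows "eval_g (q ^ (2 * r')) (Eu n q (2 * r)) = [:if r' = r then 1 else 0:]"
  using character_orthogonality[OF assms] by (simp add: Eu_eq poly_Eu_poly)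

lemma sum_Eu: "(\<Sum>r<n. Eu n q (2 * r)) = 1"
proof -
  have coeff_sum: "(\<Sum>r<n. inverse (of_nat n) * inverse (q ^ (2 * r * v))) = (if v = 0 then 1 else 0)"
    if v: "v < n" for v
  proof -
    have "inverse (q ^ (2 * r * v)) = (q ^ (2 * 0) * inverse (q ^ (2 * v))) ^ r" for r
      by (simp add: power_mult[symmetric] power_inverse mult_ac)
    hence "(\<Sum>r<n. inverse (of_nat n) * inverse (q ^ (2 * r * v)))
        = inverse (of_nat n) * (\<Sum>r<n. (q ^ (2 * 0) * inverse (q ^ (2 * v))) ^ r)"
      by (simp only: sum_distrib_left)
    thus ?thesis using character_orthogonality[of v 0] v n_pos by auto
  qed
  have "(\<Sum>r<n. Eu_poly (2 * r)) = (\<Sum>v<n. monom (\<Sum>r<n. inverse (of_nat n) * inverse (q ^ (2 * r * v))) v)"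
    unfolding Eu_poly_def by (subst sum.swap) (simp only: monom_sum)
  also have "\<dots> = (\<Sum>v<n. monom (if v = 0 then 1 else 0) v)"
    by (rule sum.cong[OF refl]) (simp add: coeff_sum)
  also have "\<dots> = (\<Sum>v<n. if v = 0 then 1 else 0)"
    by (rule sum.cong[OF refl]) simp
  also have "\<dots> = 1" using n_pos by (subst sum.delta) auto
  finally show ?thesis by (simp add: Eu_eq gpoly_def sum_to_poly one_pCons)
qed

lemma linear_times_Eu_poly: "[:-(q ^ u), 1:] * Eu_poly u = smult (q ^ u / of_nat n) (monom 1 n - 1)"
proof (rule poly_ext)
  fix x
  let ?z = "q ^ u"
  let ?y = "x * inverse ?z"
  have z0: "?z \<noteq> 0" using q_nonzero by simp
  have "(?y - 1) * (\<Sum>v<n. ?y ^ v) = ?y ^ n - 1"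
    using one_diff_power_eq[of ?y n] by (metis minus_diff_eq mult_minus_left)
  also have "?y ^ n = x ^ n" by (simp add: power_mult_distrib power_inverse)
  finally have geom: "(?y - 1) * (\<Sum>v<n. ?y ^ v) = x ^ n - 1" .
  have "poly ([:-?z, 1:] * Eu_poly u) x = (x - ?z) * (inverse (of_nat n) * (\<Sum>v<n. ?y ^ v))"
    by (simp add: poly_Eu_poly left_diff_distrib)
  also have "x - ?z = ?z * (?y - 1)" using z0 by (simp add: field_simps)
  also have "?z * (?y - 1) * (inverse (of_nat n) * (\<Sum>v<n. ?y ^ v)) = ?z * inverse (of_nat n) * ((?y - 1) * (\<Sum>v<n. ?y ^ v))"
    by (simp only: mult_ac)
  also have "\<dots> = poly (smult (?z / of_nat n) (monom 1 n - 1)) x"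
    by (simp add: geom poly_monom divide_inverse)
  finally show "poly ([:-?z, 1:] * Eu_poly u) x = poly (smult (?z / of_nat n) (monom 1 n - 1)) x" .
qed

definition in_ideal :: "complex poly poly \<Rightarrow> bool" where
  "in_ideal X \<longleftrightarrow> (\<exists>A B. X = A * gpoly (monom 1 n - 1) + B * fpol n)"

lemma congI_iff_in_ideal: "congI n P Q \<longleftrightarrow> in_ideal (P - Q)"
  by (simp add: congI_def in_ideal_def)

lemma in_ideal_0: "in_ideal 0"
  unfolding in_ideal_def by (intro exI[of _ 0]) simp

lemma in_ideal_add: "in_ideal X \<Longrightarrow> in_ideal Y \<Longrightarrow> in_ideal (X + Y)"
  unfolding in_ideal_def
  by (elim exE, rename_tac A B C D, rule_tac x = "A + C" in exI, rule_tac x = "B + D" in exI)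
     (simp add: algebra_simps)

lemma in_ideal_mult: "in_ideal X \<Longrightarrow> in_ideal (R * X)"
  unfolding in_ideal_def
  by (elim exE, rename_tac A B, rule_tac x = "R * A" in exI, rule_tac x = "R * B" in exI)
     (simp add: algebra_simps)

lemma in_ideal_diff: "in_ideal X \<Longrightarrow> in_ideal Y \<Longrightarrow> in_ideal (X - Y)"
  using in_ideal_add[of X "(-1) * Y"] in_ideal_mult[of Y "-1"] by simp

lemma in_ideal_sum: "(\<And>i. i \<in> A \<Longrightarrow> in_ideal (f i)) \<Longrightarrow> in_ideal (\<Sum>i\<in>A. f i)"
  by (induction A rule: infinite_finite_induct) (auto intro: in_ideal_0 in_ideal_add)

lemma in_ideal_mult_fpol: "in_ideal (B * fpol n)"
  unfolding in_ideal_def by (intro exI[of _ 0] exI[of _ B]) simp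

lemma congI_refl: "congI n P P"
  by (simp add: congI_iff_in_ideal in_ideal_0)

lemma congI_sym: "congI n P Q \<Longrightarrow> congI n Q P"
  unfolding congI_iff_in_ideal using in_ideal_mult[of "P - Q" "-1"] by simp

lemma congI_trans: "congI n P Q \<Longrightarrow> congI n Q R \<Longrightarrow> congI n P R"
  unfolding congI_iff_in_ideal using in_ideal_add[of "P - Q" "Q - R"] by simp

lemma congI_add: "congI n P Q \<Longrightarrow> congI n P' Q' \<Longrightarrow> congI n (P + P') (Q + Q')"
  unfolding congI_iff_in_ideal using in_ideal_add[of "P - Q" "P' - Q'"] by (simp add: algebra_simps)

lemma congI_mult_right: "congI n P Q \<Longrightarrow> congI n (P * R) (Q * R)"
  unfolding congI_iff_in_ideal using in_ideal_mult[of "P - Q" R] by (simp add: algebra_simps)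

lemma congI_sc: "congI n P Q \<Longrightarrow> congI n (sc c P) (sc c Q)"
  unfolding congI_iff_in_ideal sc_eq_gpoly_mult
  using in_ideal_mult[of "P - Q" "gpoly [:c:]"] by (simp add: algebra_simps)

lemma congI_sum: "(\<And>i. i \<in> A \<Longrightarrow> congI n (f i) (g i)) \<Longrightarrow> congI n (\<Sum>i\<in>A. f i) (\<Sum>i\<in>A. g i)"
  by (induction A rule: infinite_finite_induct) (auto intro: congI_add congI_refl)

text \<open>E_u kills g - q^u, since (g - q^u) E_u is a multiple of g^n - 1.\<close>

lemma in_ideal_Eu_times_sub_xpoly_eval_g: "in_ideal (Eu n q u * (P - xpoly (eval_g (q ^ u) P)))"
proof -
  let ?M = "map_poly (\<lambda>c. synthetic_div c (q ^ u)) P"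
  have "Eu n q u * (P - xpoly (eval_g (q ^ u) P)) = gpoly (Eu_poly u) * (gpoly [:-(q ^ u), 1:] * ?M)"
    by (simp only: sub_xpoly_eval_g Eu_eq)
  also have "\<dots> = gpoly ([:-(q ^ u), 1:] * Eu_poly u) * ?M"
    by (simp only: gpoly_mult mult.assoc[symmetric] mult.commute[of "Eu_poly u"])
  also have "\<dots> = gpoly (smult (q ^ u / of_nat n) (monom 1 n - 1)) * ?M"
    by (simp only: linear_times_Eu_poly)
  also have "\<dots> = (gpoly [:q ^ u / of_nat n:] * ?M) * gpoly (monom 1 n - 1)"
    by (simp add: gpoly_def)
  finally show ?thesis unfolding in_ideal_def
    by (intro exI[of _ "gpoly [:q ^ u / of_nat n:] * ?M"] exI[of _ 0]) simp
qed

definition component :: "nat \<Rightarrow> complex poly poly \<Rightarrow> complex poly" where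
  "component r P = eval_g (q ^ (2 * r)) P"

abbreviation f_at :: "nat \<Rightarrow> complex poly" where
  "f_at r \<equiv> fx n (q ^ (2 * r))"

lemma component_simps [simp]:
  "component r (P + Q) = component r P + component r Q"
  "component r (P - Q) = component r P - component r Q"
  "component r (P * Q) = component r P * component r Q"
  "component r (sc c P) = smult c (component r P)"
  "component r 0 = 0" "component r 1 = 1" "component r Xv = [:0, 1:]"
  by (simp_all add: component_def)

lemma component_sum: "component r (\<Sum>i\<in>A. f i) = (\<Sum>i\<in>A. component r (f i))"
  by (simp add: component_def)

lemma component_xpoly_Eu: "r < n \<Longrightarrow> r' < n \<Longrightarrow>
    component r' (xpoly p * Eu n q (2 * r)) = (if r' = r then p else 0)"
  by (simp add: component_def eval_g_Eu)

text \<open>Chinese remainder theorem: the algebra is the product of the local algebras C[x]/(f_r).\<close>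

theorem congI_iff_components: "congI n P Q \<longleftrightarrow> (\<forall>r<n. f_at r dvd component r P - component r Q)"
proof
  assume "congI n P Q"
  then obtain A B where AB: "P - Q = A * gpoly (monom 1 n - 1) + B * fpol n"
    unfolding congI_def by blast
  have "component r P - component r Q = component r B * f_at r" for r
  proof -
    have "component r P - component r Q = eval_g (q ^ (2 * r)) (P - Q)"
      by (simp add: component_def)
    thus ?thesis by (simp add: AB component_def eval_g_fpol poly_monom)
  qed
  thus "\<forall>r<n. f_at r dvd component r P - component r Q" by simp
next
  assume H: "\<forall>r<n. f_at r dvd component r P - component r Q"
  let ?D = "P - Q"
  have "in_ideal (Eu n q (2 * r) * ?D)" if r: "r < n" for r
  proof -
    let ?z = "q ^ (2 * r)" and ?E = "Eu n q (2 * r)"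
    txt \<open>Modulo the ideal, E_(2r) D = E_(2r) D(q^(2r)) = E_(2r) f_r K = E_(2r) f K.\<close>
    obtain K where K: "eval_g ?z ?D = fx n ?z * K" using H r by (auto simp: dvd_def component_def)
    have "?E * ?D = ?E * (?D - xpoly (eval_g ?z ?D)) + (?E * xpoly K) * fpol n
        - xpoly K * (?E * (fpol n - xpoly (eval_g ?z (fpol n))))"
      unfolding K xpoly_mult eval_g_fpol by (simp add: algebra_simps)
    thus ?thesis
      by (simp only:) (intro in_ideal_add in_ideal_diff in_ideal_mult in_ideal_mult_fpol
          in_ideal_Eu_times_sub_xpoly_eval_g)
  qed
  hence "in_ideal (\<Sum>r<n. Eu n q (2 * r) * ?D)" by (auto intro: in_ideal_sum)
  thus "congI n P Q" by (simp add: congI_iff_in_ideal sum_Eu flip: sum_distrib_right)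
qed

lemma congI_0_iff_components: "congI n P 0 \<longleftrightarrow> (\<forall>r<n. f_at r dvd component r P)"
  unfolding congI_iff_components by simp

section \<open>Factorisation of f(x, q^(2r))\<close>

definition dickson :: "complex \<Rightarrow> complex" where
  "dickson s = (\<Sum>i\<in>{0..h}. (-1) ^ i * of_nat n / of_nat (n - i) * of_nat ((n - i) choose i) * s ^ (n - 2 * i))"

lemma dickson_coeff_split:
  assumes "1 \<le> i" "i \<le> h"
  shows "of_nat n / of_nat (n - i) * of_nat ((n - i) choose i)
       = (of_nat ((n - i) choose i) + of_nat ((n - 1 - i) choose (i - 1)) :: complex)"
proof -
  obtain k where k: "i = Suc k" using assms by (cases i) auto
  have "n - i > 0" using assms n_eq by simp
  then obtain N where N: "n - i = Suc N" using gr0_implies_Suc by blast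
  define a :: complex where "a = of_nat (Suc N)"
  define c :: complex where "c = of_nat (Suc N choose i)"
  define d :: complex where "d = of_nat (N choose k)"
  have "a \<noteq> 0" unfolding a_def by (simp only: of_nat_eq_0_iff)
  moreover have "of_nat i * c = a * d"
    unfolding a_def c_def d_def k by (simp only: of_nat_mult[symmetric] Suc_times_binomial)
  ultimately have "(a + of_nat i) / a * c = c + d" by (simp add: field_simps)
  moreover have "n = Suc N + i" "n - 1 - i = N" using N assms n_eq by linarith+
  ultimately show ?thesis using N k by (simp add: a_def c_def d_def)
qed

lemma dickson_term_eq:
  assumes "i \<in> {1..h}"
  shows "(-1) ^ i * of_nat n / of_nat (n - i) * of_nat ((n - i) choose i) * s ^ (n - 2 * i)
       = cheb_U_term s n i - cheb_U_term s (n - 2) (i - 1)"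
proof -
  have e: "n - 2 - (i - 1) = n - 1 - i" "n - 2 - 2 * (i - 1) = n - 2 * i" using assms n_eq by auto
  have sign: "(-1::complex) ^ i = - ((-1) ^ (i - 1))" using assms by (cases i) auto
  have "(-1) ^ i * of_nat n / of_nat (n - i) * of_nat ((n - i) choose i) * s ^ (n - 2 * i)
      = (-1) ^ i * (of_nat n / of_nat (n - i) * of_nat ((n - i) choose i)) * s ^ (n - 2 * i)"
    by simp
  also have "\<dots> = (-1) ^ i * (of_nat ((n - i) choose i) + of_nat ((n - 1 - i) choose (i - 1))) * s ^ (n - 2 * i)"
    using dickson_coeff_split[of i] assms by simp
  also have "\<dots> = cheb_U_term s n i - cheb_U_term s (n - 2) (i - 1)"
    unfolding cheb_U_term_def e sign by (simp add: algebra_simps)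
  finally show ?thesis .
qed

lemma dickson_eq_cheb_U: "dickson s = cheb_U s n - cheb_U s (n - 2)"
proof -
  have split: "{0..h} = insert 0 {1..h}" by auto
  have "dickson s = cheb_U_term s n 0
      + (\<Sum>i\<in>{1..h}. (-1) ^ i * of_nat n / of_nat (n - i) * of_nat ((n - i) choose i) * s ^ (n - 2 * i))"
    unfolding dickson_def split using n_pos by (simp add: cheb_U_term_def)
  also have "\<dots> = cheb_U_term s n 0 + (\<Sum>i\<in>{1..h}. cheb_U_term s n i - cheb_U_term s (n - 2) (i - 1))"
    by (simp only: sum.cong[OF refl dickson_term_eq])
  also have "\<dots> = (\<Sum>i\<in>{0..h}. cheb_U_term s n i) - (\<Sum>i<h. cheb_U_term s (n - 2) i)"
  proof -
    have "(\<Sum>i\<in>{1..h}. cheb_U_term s (n - 2) (i - 1)) = (\<Sum>i<h. cheb_U_term s (n - 2) i)"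
      using h_pos by (intro sum.reindex_bij_witness[of _ Suc "\<lambda>i. i - 1"]) auto
    thus ?thesis unfolding split by (simp add: sum_subtractf)
  qed
  also have "(\<Sum>i\<in>{0..h}. cheb_U_term s n i) = cheb_U s n"
    unfolding cheb_U_def by (rule sum.mono_neutral_left) (auto simp: cheb_U_term_eq_0 n_eq)
  also have "(\<Sum>i<h. cheb_U_term s (n - 2) i) = cheb_U s (n - 2)"
    unfolding cheb_U_def by (rule sum.mono_neutral_left) (use h_pos in \<open>auto intro!: cheb_U_term_eq_0 simp: n_eq\<close>)
  finally show ?thesis .
qed

lemma dickson_t_plus_inverse: assumes "t \<noteq> 0" shows "dickson (t + inverse t) = t ^ n + inverse t ^ n"
proof -
  obtain m where nm: "n = Suc (Suc m)" using n_eq h_pos by (intro that[of "2 * h - 1"]) simp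
  have "dickson (t + inverse t) = hom_sum t (inverse t) n - hom_sum t (inverse t) m"
    unfolding dickson_eq_cheb_U cheb_U_t_plus_inverse[OF assms] using nm by simp
  thus ?thesis using hom_sum_Suc_Suc_diff[OF assms, of m] nm by simp
qed

text \<open>Writing x = q^r (t + t^(-1)), f(x, q^(2r)) becomes the Dickson polynomial in t + t^(-1).\<close>

lemma poly_fx_t_plus_inverse: assumes "t \<noteq> 0"
  shows "poly (f_at r) (q ^ r * (t + inverse t)) = t ^ n + inverse t ^ n - 2"
proof -
  let ?s = "t + inverse t"
  let ?c = "\<lambda>i. (-1) ^ i * of_nat n / of_nat (n - i) * of_nat ((n - i) choose i) :: complex"
  have "f_at r = (\<Sum>i\<in>{0..h}. monom (?c i * (q ^ (2 * r)) ^ i) (n - 2 * i)) - 2"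
    unfolding eval_g_fpol[symmetric] fpol_def hh_eq by (simp add: poly_monom)
  hence "poly (f_at r) (q ^ r * ?s) = (\<Sum>i\<in>{0..h}. ?c i * (q ^ (2 * r)) ^ i * (q ^ r * ?s) ^ (n - 2 * i)) - 2"
    by (simp add: poly_sum poly_monom)
  also have "(\<Sum>i\<in>{0..h}. ?c i * (q ^ (2 * r)) ^ i * (q ^ r * ?s) ^ (n - 2 * i)) = dickson ?s"
    unfolding dickson_def
  proof (rule sum.cong[OF refl])
    fix i assume i: "i \<in> {0..h}"
    have "(q ^ (2 * r)) ^ i = (q ^ r) ^ (2 * i)"
      by (simp only: power_mult[symmetric] mult_ac)
    hence "(q ^ (2 * r)) ^ i * (q ^ r * ?s) ^ (n - 2 * i) = (q ^ r) ^ (2 * i + (n - 2 * i)) * ?s ^ (n - 2 * i)"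
      by (simp only: power_mult_distrib power_add mult.assoc)
    also have "2 * i + (n - 2 * i) = n" using i n_eq by simp
    finally show "?c i * (q ^ (2 * r)) ^ i * (q ^ r * ?s) ^ (n - 2 * i) = ?c i * ?s ^ (n - 2 * i)"
      by simp
  qed
  finally show ?thesis using dickson_t_plus_inverse[OF assms] by simp
qed

lemma prod_linear_q_powers: "(\<Prod>j<n. [:-(q ^ j), 1:]) = monom 1 n - 1"
proof (rule monic_dvd_imp_eq)
  have "inj_on (\<lambda>j. q ^ j) {..<n}" using q_power_inj by (auto simp: inj_on_def)
  hence "(\<Prod>j<n. [:-(q ^ j), 1:]) = (\<Prod>a\<in>(\<lambda>j. q ^ j) ` {..<n}. [:-a, 1:])"
    by (simp add: prod.reindex)
  also have "\<dots> dvd monom 1 n - 1"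
    by (rule prod_linear_factors_dvd) (auto simp: poly_monom)
  finally show "(\<Prod>j<n. [:-(q ^ j), 1:]) dvd monom 1 n - 1" .
  show "degree (\<Prod>j<n. [:-(q ^ j), 1:]) = degree (monom (1::complex) n - 1)"
    using monom_1_minus_1[OF n_pos] by (subst degree_prod_eq_sum_degree) auto
qed (use monom_1_minus_1[OF n_pos] n_pos in \<open>simp_all add: lead_coeff_prod\<close>)

lemma inverse_q_power: "j \<le> n \<Longrightarrow> inverse (q ^ j) = q ^ (n - j)"
  using q_power_n by (intro inverse_unique) (simp flip: power_add)

lemma prod_paired_q_powers: "(t - 1) * (\<Prod>j\<in>{1..h}. (t - q ^ j) * (t - inverse (q ^ j))) = t ^ n - 1"
proof -
  let ?g = "\<lambda>j. t - q ^ j"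
  have split: "{..<n} = insert 0 ({1..h} \<union> {h + 1..2 * h})" using n_eq by auto
  have "(\<Prod>j<n. ?g j) = ?g 0 * ((\<Prod>j\<in>{1..h}. ?g j) * (\<Prod>j\<in>{h + 1..2 * h}. ?g j))"
    unfolding split by (subst prod.insert) (auto simp: prod.union_disjoint)
  also have "(\<Prod>j\<in>{h + 1..2 * h}. ?g j) = (\<Prod>j\<in>{1..h}. t - inverse (q ^ j))"
    by (rule prod.reindex_bij_witness[of _ "\<lambda>j. n - j" "\<lambda>j. n - j"]) (auto simp: n_eq inverse_q_power)
  finally have "(\<Prod>j<n. ?g j) = (t - 1) * (\<Prod>j\<in>{1..h}. (t - q ^ j) * (t - inverse (q ^ j)))"
    by (simp add: prod.distrib)
  moreover have "(\<Prod>j<n. ?g j) = t ^ n - 1"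
    using arg_cong[OF prod_linear_q_powers, of "\<lambda>p. poly p t"] by (simp add: poly_prod poly_monom)
  ultimately show ?thesis by simp
qed

definition lin :: "nat \<Rightarrow> nat \<Rightarrow> complex poly" where
  "lin j r = [:- lam q j r, 1:]"

definition T :: "nat \<Rightarrow> complex poly" where
  "T r = (\<Prod>j\<in>{1..h}. lin j r)"

lemma poly_lin [simp]: "poly (lin j r) x = x - lam q j r"
  and lin_nonzero [simp]: "lin j r \<noteq> 0"
  and degree_lin [simp]: "degree (lin j r) = 1"
  by (simp_all add: lin_def)

lemma t_plus_inverse_diff:
  fixes t a y :: complex
  assumes "t \<noteq> 0" "a \<noteq> 0"
  shows "y * (t + inverse t) - y * (a + inverse a) = y * inverse t * ((t - a) * (t - inverse a))"
  using assms by (simp add: field_simps)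

lemma ex_t_plus_inverse: "\<exists>t::complex. t \<noteq> 0 \<and> t + inverse t = w"
proof -
  define t where "t = (w + csqrt (w ^ 2 - 4)) / 2"
  define t' where "t' = (w - csqrt (w ^ 2 - 4)) / 2"
  have "t * t' = 1" unfolding t_def t'_def by (simp add: field_simps power2_eq_square[symmetric])
  moreover have "t + t' = w" unfolding t_def t'_def by (simp add: field_simps)
  ultimately show ?thesis by (intro exI[of _ t]) (auto simp: inverse_unique)
qed

lemma poly_lin_T_t_plus_inverse:
  assumes t: "t \<noteq> 0"
  shows "poly (lin 0 r * T r ^ 2) (q ^ r * (t + inverse t)) = t ^ n + inverse t ^ n - 2"
proof -
  let ?y = "q ^ r"
  let ?A = "?y * inverse t" and ?P = "\<Prod>j\<in>{1..h}. (t - q ^ j) * (t - inverse (q ^ j))"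
  have lin_eq: "poly (lin j r) (?y * (t + inverse t)) = ?A * ((t - q ^ j) * (t - inverse (q ^ j)))" for j
    using t_plus_inverse_diff[OF t, of "q ^ j" ?y] q_nonzero by (simp add: lam_def)
  have "poly (lin 0 r * T r ^ 2) (?y * (t + inverse t))
      = poly (lin 0 r) (?y * (t + inverse t)) * (\<Prod>j\<in>{1..h}. poly (lin j r) (?y * (t + inverse t))) ^ 2"
    by (simp add: T_def poly_prod)
  also have "\<dots> = ?A * ((t - 1) * (t - 1)) * (?A ^ h * ?P) ^ 2"
    using lin_eq[of 0] by (simp only: lin_eq) (simp add: prod.distrib power_mult_distrib)
  also have "\<dots> = (?A * ?A ^ h * ?A ^ h) * ((t - 1) * ?P) ^ 2"
    by (simp only: power2_eq_square mult_ac)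
  also have "?A * ?A ^ h * ?A ^ h = ?A ^ n"
    using n_eq by (simp add: mult_2 power_add)
  also have "\<dots> = inverse t ^ n"
    by (simp add: power_mult_distrib)
  also have "inverse t ^ n * ((t - 1) * ?P) ^ 2 = inverse t ^ n * (t ^ n - 1) ^ 2"
    by (simp only: prod_paired_q_powers)
  also have "\<dots> = t ^ n + inverse t ^ n - 2"
    using t by (simp add: power2_eq_square field_simps)
  finally show ?thesis .
qed

theorem fx_factorisation: "f_at r = lin 0 r * T r ^ 2"
proof (rule poly_ext)
  fix x
  obtain t where t: "t \<noteq> 0" "t + inverse t = x / q ^ r" using ex_t_plus_inverse by blast
  hence x: "x = q ^ r * (t + inverse t)" using q_nonzero by simp
  show "poly (f_at r) x = poly (lin 0 r * T r ^ 2) x"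
    unfolding x poly_fx_t_plus_inverse[OF t(1)] poly_lin_T_t_plus_inverse[OF t(1)] ..
qed

lemma lam_inj: assumes "j \<le> h" "k \<le> h" "lam q j r = lam q k r" shows "j = k"
proof -
  define a where "a = q ^ j"
  define b where "b = q ^ k"
  have a0: "a \<noteq> 0" and b0: "b \<noteq> 0" unfolding a_def b_def using q_nonzero by auto
  have "a + inverse a = b + inverse b" using assms(3) q_nonzero by (simp add: lam_def a_def b_def)
  hence "(a - b) * (a * b - 1) = 0" using a0 b0 by (simp add: field_simps)
  hence "a = b \<or> a * b = 1" by simp
  thus ?thesis
  proof
    assume "a = b" thus ?thesis using q_power_inj[of j k] assms(1,2) n_eq by (simp add: a_def b_def)
  next
    assume "a * b = 1"
    hence "q ^ (j + k) = 1" by (simp add: a_def b_def power_add)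
    hence "\<not> (0 < j + k \<and> j + k < n)" using q_primitive by blast
    thus ?thesis using assms(1,2) n_eq by simp
  qed
qed

section \<open>Local cofactors\<close>

definition T_except :: "nat \<Rightarrow> nat \<Rightarrow> complex poly" where
  "T_except j r = (\<Prod>k\<in>{1..h}-{j}. lin k r)"

text \<open>F_loc j r = f_r / (x - \<lambda>_(j,r)) and G_loc j r = f_r / (x - \<lambda>_(j,r))^2 are the components
  at r of F_(j,r) and G_(j,r).\<close>

definition F_loc :: "nat \<Rightarrow> nat \<Rightarrow> complex poly" where
  "F_loc j r = (if j = 0 then (T r)^2 else lin 0 r * T r * T_except j r)"

definition G_loc :: "nat \<Rightarrow> nat \<Rightarrow> complex poly" where
  "G_loc j r = lin 0 r * (T_except j r)^2"

lemma T_split: "j \<in> {1..h} \<Longrightarrow> T r = lin j r * T_except j r"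
  unfolding T_def T_except_def by (rule prod.remove) auto

lemma f_at_eq_lin_F_loc: "j \<in> {0..h} \<Longrightarrow> f_at r = lin j r * F_loc j r"
proof -
  assume j: "j \<in> {0..h}"
  show ?thesis
  proof (cases "j = 0")
    case True thus ?thesis unfolding fx_factorisation by (simp add: F_loc_def)
  next
    case False
    hence "T r = lin j r * T_except j r" using j by (intro T_split) auto
    thus ?thesis using False unfolding fx_factorisation by (simp add: F_loc_def power2_eq_square mult_ac)
  qed
qed

lemma F_loc_eq_lin_G_loc: "j \<in> {1..h} \<Longrightarrow> F_loc j r = lin j r * G_loc j r"
proof -
  assume j: "j \<in> {1..h}"
  hence "T r = lin j r * T_except j r" by (rule T_split)
  thus ?thesis using j by (simp add: F_loc_def G_loc_def power2_eq_square mult_ac)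
qed

lemma f_at_eq_lin_sq_G_loc: "j \<in> {1..h} \<Longrightarrow> f_at r = lin j r ^ 2 * G_loc j r"
  using f_at_eq_lin_F_loc[of j r] F_loc_eq_lin_G_loc[of j r] by (simp add: power2_eq_square mult_ac)

lemma T_nonzero: "T r \<noteq> 0" by (simp add: T_def)

lemma f_at_nonzero: "f_at r \<noteq> 0" unfolding fx_factorisation by (simp add: T_nonzero)

lemma degree_T: "degree (T r) = h"
  unfolding T_def by (subst degree_prod_eq_sum_degree) auto

lemma degree_f_at: "degree (f_at r) = n"
  using T_nonzero[of r] unfolding fx_factorisation by (simp add: degree_mult_eq degree_T degree_power_eq n_eq)

lemma degree_F_loc_le: "j \<in> {0..h} \<Longrightarrow> degree (F_loc j r) \<le> n - 1"
proof -
  assume j: "j \<in> {0..h}"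
  have "F_loc j r \<noteq> 0" using f_at_eq_lin_F_loc[OF j, of r] f_at_nonzero[of r] by auto
  hence "degree (f_at r) = degree (lin j r) + degree (F_loc j r)"
    using f_at_eq_lin_F_loc[OF j] by (simp add: degree_mult_eq)
  thus ?thesis using degree_f_at by simp
qed

lemma degree_G_loc_le: "j \<in> {1..h} \<Longrightarrow> degree (G_loc j r) \<le> n - 1"
proof -
  assume j: "j \<in> {1..h}"
  have "G_loc j r \<noteq> 0" using f_at_eq_lin_sq_G_loc[OF j, of r] f_at_nonzero[of r] by auto
  hence "degree (f_at r) = degree (lin j r ^ 2) + degree (G_loc j r)"
    using f_at_eq_lin_sq_G_loc[OF j] by (simp add: degree_mult_eq)
  thus ?thesis using degree_f_at by (simp add: degree_power_eq)
qed

lemma poly_T_lam: "k \<in> {1..h} \<Longrightarrow> poly (T r) (lam q k r) = 0"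
  using T_split[of k r] by simp

lemma poly_T: "poly (T r) x = (\<Prod>j\<in>{1..h}. x - lam q j r)"
  by (simp add: T_def poly_prod)

lemma poly_T_lam_0_nonzero: "poly (T r) (lam q 0 r) \<noteq> 0"
proof -
  have "lam q 0 r - lam q j r \<noteq> 0" if "j \<in> {1..h}" for j using lam_inj[of 0 j r] that by auto
  thus ?thesis unfolding poly_T by (subst prod_zero_iff) auto
qed

lemma poly_T_except_lam: "k \<in> {1..h} - {j} \<Longrightarrow> poly (T_except j r) (lam q k r) = 0"
  unfolding T_except_def poly_prod by (rule prod_zero) auto

lemma poly_T_except_same: "j \<in> {1..h} \<Longrightarrow> poly (T_except j r) (lam q j r) = (\<Prod>k\<in>{1..h}-{j}. lam q j r - lam q k r)"
  by (simp add: T_except_def poly_prod)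

lemma poly_T_except_same_nonzero: assumes "j \<in> {1..h}" shows "poly (T_except j r) (lam q j r) \<noteq> 0"
proof -
  have "lam q j r - lam q k r \<noteq> 0" if "k \<in> {1..h} - {j}" for k using lam_inj[of j k r] assms that by auto
  thus ?thesis unfolding poly_T_except_same[OF assms] by (subst prod_zero_iff) auto
qed

lemma poly_sum_T_except_lam: assumes "k \<in> {1..h}"
  shows "poly (\<Sum>j\<in>{1..h}. smult (a j) (T_except j r)) (lam q k r) = a k * poly (T_except k r) (lam q k r)"
proof -
  have "poly (\<Sum>j\<in>{1..h}. smult (a j) (T_except j r)) (lam q k r)
      = (\<Sum>j\<in>{1..h}. if j = k then a k * poly (T_except k r) (lam q k r) else 0)"
    unfolding poly_sum by (rule sum.cong[OF refl]) (use poly_T_except_lam[of k _ r] assms in auto)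
  thus ?thesis using assms by simp
qed

lemma lam_0: "lam q 0 r = 2 * q ^ r"
  by (simp add: lam_def)

lemma xi_eq: "xi n q r = (poly (T r) (lam q 0 r))^2"
  by (simp add: xi_def hh_eq poly_T lam_0 prod_power_distrib[symmetric])

lemma xi_nonzero: "xi n q r \<noteq> 0" using poly_T_lam_0_nonzero by (simp add: xi_eq)

lemma theta_eq: "theta n q j r = (lam q j r - lam q 0 r) * (poly (T_except j r) (lam q j r))^2"
  by (simp add: theta_def hh_eq T_except_def poly_prod prod_power_distrib[symmetric])

lemma theta_nonzero: "j \<in> {1..h} \<Longrightarrow> theta n q j r \<noteq> 0"
  using poly_T_except_same_nonzero[of j r] lam_inj[of j 0 r] by (auto simp: theta_eq)

lemma poly_F_loc_lam: assumes "j \<in> {0..h}" "k \<in> {0..h}"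
  shows "poly (F_loc j r) (lam q k r) = (if j = 0 \<and> k = 0 then xi n q r else 0)"
proof (cases "j = 0")
  case True
  thus ?thesis using assms poly_T_lam[of k r] by (auto simp: F_loc_def xi_eq)
next
  case False
  thus ?thesis using assms poly_T_lam[of k r] by (cases "k = 0") (auto simp: F_loc_def)
qed

lemma poly_G_loc_lam: assumes "j \<in> {1..h}" "k \<in> {0..h}"
  shows "poly (G_loc j r) (lam q k r) = (if k = j then theta n q j r else 0)"
proof (cases "k = 0")
  case True thus ?thesis using assms by (auto simp: G_loc_def)
next
  case False
  thus ?thesis using assms poly_T_except_lam[of k j r] by (auto simp: G_loc_def theta_eq)
qed

lemma T_eq_prod_roots: "T r = (\<Prod>a\<in>(\<lambda>j. lam q j r) ` {1..h}. [:-a,1:])"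
proof -
  have "inj_on (\<lambda>j. lam q j r) {1..h}" using lam_inj[of _ _ r] by (auto simp: inj_on_def)
  thus ?thesis unfolding T_def by (simp add: prod.reindex lin_def)
qed

lemma lin_0_T_eq_prod_roots: "lin 0 r * T r = (\<Prod>a\<in>(\<lambda>j. lam q j r) ` {0..h}. [:-a,1:])"
proof -
  have inj: "inj_on (\<lambda>j. lam q j r) {0..h}" using lam_inj[of _ _ r] by (auto simp: inj_on_def)
  have "{0..h} = insert 0 {1..h}" by auto
  hence "(\<Prod>j\<in>{0..h}. lin j r) = lin 0 r * T r" by (simp add: T_def)
  thus ?thesis by (simp add: prod.reindex[OF inj] lin_def)
qed

lemma lin_0_T_dvd_if_vanishing: "(\<forall>k\<in>{0..h}. poly p (lam q k r) = 0) \<Longrightarrow> lin 0 r * T r dvd p"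
  unfolding lin_0_T_eq_prod_roots by (rule prod_linear_factors_dvd) auto

lemma T_dvd_if_vanishing: "(\<forall>k\<in>{1..h}. poly p (lam q k r) = 0) \<Longrightarrow> T r dvd p"
  unfolding T_eq_prod_roots by (rule prod_linear_factors_dvd) auto

lemma F_loc_eq_lin_0_T: "j \<in> {1..h} \<Longrightarrow> F_loc j r = (lin 0 r * T r) * T_except j r"
  by (simp add: F_loc_def)

lemma f_at_eq_lin_0_T_T: "f_at r = (lin 0 r * T r) * T r"
  unfolding fx_factorisation by (simp add: power2_eq_square mult_ac)

lemma lin_0_T_dvd_imp_F_loc_comb: assumes "lin 0 r * T r dvd p"
  shows "\<exists>a. f_at r dvd p - (\<Sum>j\<in>{1..h}. smult (a j) (F_loc j r))"
proof -
  let ?S = "lin 0 r * T r"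
  obtain Q where Q: "p = ?S * Q" using assms by (auto simp: dvd_def)
  define a where "a j = poly Q (lam q j r) / poly (T_except j r) (lam q j r)" for j
  let ?R = "Q - (\<Sum>j\<in>{1..h}. smult (a j) (T_except j r))"
  have "poly ?R (lam q k r) = 0" if "k \<in> {1..h}" for k
    using poly_sum_T_except_lam[OF that] poly_T_except_same_nonzero[OF that] by (simp add: a_def)
  hence "T r dvd ?R" by (intro T_dvd_if_vanishing) blast
  hence "?S * T r dvd ?S * ?R" by (rule mult_dvd_mono[OF dvd_refl])
  moreover have "?S * ?R = p - (\<Sum>j\<in>{1..h}. smult (a j) (F_loc j r))"
    by (simp add: Q algebra_simps sum_distrib_left F_loc_eq_lin_0_T mult_smult_right)
  ultimately show ?thesis unfolding f_at_eq_lin_0_T_T by metis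
qed

lemma sum_0_to_h: "(\<Sum>j\<in>{0..h}. f j) = f 0 + (\<Sum>j\<in>{1..h}. f j)"
proof -
  have "{0..h} = insert 0 {1..h}" by auto
  thus ?thesis by simp
qed

definition FG_comb :: "(nat \<Rightarrow> complex) \<Rightarrow> (nat \<Rightarrow> complex) \<Rightarrow> nat \<Rightarrow> complex poly" where
  "FG_comb a b r = (\<Sum>j\<in>{0..h}. smult (a j) (F_loc j r)) + (\<Sum>j\<in>{1..h}. smult (b j) (G_loc j r))"

lemma poly_FG_comb_lam: assumes "k \<in> {0..h}"
  shows "poly (FG_comb a b r) (lam q k r) = (if k = 0 then a 0 * xi n q r else b k * theta n q k r)"
proof -
  have s1: "(\<Sum>j\<in>{0..h}. a j * poly (F_loc j r) (lam q k r)) = (if k = 0 then a 0 * xi n q r else 0)"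
    using assms by (simp add: poly_F_loc_lam if_distrib sum_0_to_h cong: if_cong)
  have s2: "(\<Sum>j\<in>{1..h}. b j * poly (G_loc j r) (lam q k r)) = (if k = 0 then 0 else b k * theta n q k r)"
  proof -
    have "(\<Sum>j\<in>{1..h}. b j * poly (G_loc j r) (lam q k r)) = (\<Sum>j\<in>{1..h}. if j = k then b k * theta n q k r else 0)"
      by (rule sum.cong[OF refl]) (use assms in \<open>auto simp: poly_G_loc_lam\<close>)
    also have "\<dots> = (if k = 0 then 0 else b k * theta n q k r)" using assms by auto
    finally show ?thesis .
  qed
  show ?thesis unfolding FG_comb_def using s1 s2 by (simp add: poly_sum)
qed

lemma FG_comb_span: "\<exists>a b. f_at r dvd p - FG_comb a b r"
proof -
  define a0 where "a0 = poly p (lam q 0 r) / xi n q r"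
  define b where "b k = poly p (lam q k r) / theta n q k r" for k
  let ?p1 = "p - FG_comb (\<lambda>j. if j = 0 then a0 else 0) b r"
  have "\<forall>k\<in>{0..h}. poly ?p1 (lam q k r) = 0"
    using xi_nonzero theta_nonzero by (auto simp: poly_FG_comb_lam a0_def b_def)
  hence "lin 0 r * T r dvd ?p1" by (rule lin_0_T_dvd_if_vanishing)
  then obtain a' where a': "f_at r dvd ?p1 - (\<Sum>j\<in>{1..h}. smult (a' j) (F_loc j r))" using lin_0_T_dvd_imp_F_loc_comb by blast
  have eq: "?p1 - (\<Sum>j\<in>{1..h}. smult (a' j) (F_loc j r)) = p - FG_comb (\<lambda>j. if j = 0 then a0 else a' j) b r"
    by (simp add: FG_comb_def sum_0_to_h)
  show ?thesis by (rule exI[of _ "\<lambda>j. if j = 0 then a0 else a' j"], rule exI[of _ b]) (rule a'[unfolded eq])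
qed

lemma FG_comb_indep: assumes "f_at r dvd FG_comb a b r"
  shows "(\<forall>j\<in>{0..h}. a j = 0) \<and> (\<forall>j\<in>{1..h}. b j = 0)"
proof -
  have dc: "degree (FG_comb a b r) \<le> n - 1"
    unfolding FG_comb_def
    by (intro degree_add_le degree_sum_le order.trans[OF degree_smult_le] degree_F_loc_le degree_G_loc_le) auto
  have c0: "FG_comb a b r = 0"
  proof (rule ccontr)
    assume "FG_comb a b r \<noteq> 0"
    hence "degree (f_at r) \<le> degree (FG_comb a b r)" using dvd_imp_degree_le[OF assms] by blast
    thus False using dc degree_f_at n_pos by simp
  qed
  have a0: "a 0 = 0" using poly_FG_comb_lam[of 0 a b r] c0 xi_nonzero by simp
  have b0: "\<forall>j\<in>{1..h}. b j = 0"
  proof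
    fix j assume j: "j \<in> {1..h}"
    show "b j = 0" using poly_FG_comb_lam[of j a b r] c0 theta_nonzero[OF j] j by simp
  qed
  have "FG_comb a b r = (lin 0 r * T r) * (\<Sum>j\<in>{1..h}. smult (a j) (T_except j r))"
    using a0 b0 by (simp add: FG_comb_def sum_0_to_h F_loc_eq_lin_0_T sum_distrib_left mult_smult_right)
  hence z: "(\<Sum>j\<in>{1..h}. smult (a j) (T_except j r)) = 0" using c0 T_nonzero by simp
  have "\<forall>k\<in>{1..h}. a k = 0"
    using poly_sum_T_except_lam[of _ a r] poly_T_except_same_nonzero z by fastforce
  hence "\<forall>j\<in>{0..h}. a j = 0" using a0 by (auto simp: atLeastAtMost_iff Suc_le_eq)
  thus ?thesis using b0 by blast
qed

lemma T_dvd_T_except_mult: assumes "j \<in> {1..h}" "k \<in> {1..h}" "j \<noteq> k"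
  shows "\<exists>W. T_except j r * T_except k r = T r * W"
proof -
  have "T_except k r = lin j r * (\<Prod>i\<in>({1..h}-{k})-{j}. lin i r)"
    unfolding T_except_def by (rule prod.remove) (use assms in auto)
  hence "T_except j r * T_except k r = (lin j r * T_except j r) * (\<Prod>i\<in>({1..h}-{k})-{j}. lin i r)"
    by (simp add: mult_ac)
  thus ?thesis using T_split[OF assms(1), of r] by auto
qed

lemma F_loc_0: "F_loc 0 r = T r * T r" by (simp add: F_loc_def power2_eq_square)

lemma f_at_dvd_F_loc_F_loc: assumes j: "j \<in> {1..h}" and k: "k \<in> {1..h}" shows "f_at r dvd F_loc j r * F_loc k r"
proof -
  have "F_loc j r * F_loc k r = f_at r * (lin 0 r * T_except j r * T_except k r)"
    unfolding f_at_eq_lin_0_T_T F_loc_eq_lin_0_T[OF j] F_loc_eq_lin_0_T[OF k] by (simp only: mult_ac)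
  thus ?thesis by simp
qed

lemma f_at_dvd_F_loc_0_F_loc: assumes k: "k \<in> {1..h}" shows "f_at r dvd F_loc 0 r * F_loc k r"
proof -
  have "F_loc 0 r * F_loc k r = f_at r * (T r * T_except k r)"
    unfolding f_at_eq_lin_0_T_T F_loc_eq_lin_0_T[OF k] by (simp only: F_loc_0 power2_eq_square mult_ac)
  thus ?thesis by simp
qed

lemma f_at_dvd_F_loc_0_G_loc: "f_at r dvd F_loc 0 r * G_loc k r"
proof -
  have "F_loc 0 r * G_loc k r = f_at r * (T_except k r * T_except k r)"
    unfolding f_at_eq_lin_0_T_T by (simp only: F_loc_0 G_loc_def power2_eq_square mult_ac)
  thus ?thesis by simp
qed

lemma f_at_dvd_F_loc_G_loc: assumes "j \<in> {1..h}" "k \<in> {1..h}" "j \<noteq> k" shows "f_at r dvd F_loc j r * G_loc k r"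
proof -
  obtain W where W: "T_except j r * T_except k r = T r * W" using T_dvd_T_except_mult[OF assms] by blast
  have "F_loc j r * G_loc k r = lin 0 r * lin 0 r * T r * T_except k r * (T_except j r * T_except k r)"
    unfolding F_loc_eq_lin_0_T[OF assms(1)] G_loc_def by (simp only: power2_eq_square mult_ac)
  also have "\<dots> = (lin 0 r * T r) * T r * (lin 0 r * T_except k r * W)"
    unfolding W by (simp only: mult_ac)
  finally show ?thesis unfolding f_at_eq_lin_0_T_T by simp
qed

lemma f_at_dvd_G_loc_G_loc: assumes "j \<in> {1..h}" "k \<in> {1..h}" "j \<noteq> k" shows "f_at r dvd G_loc j r * G_loc k r"
proof -
  obtain W where W: "T_except j r * T_except k r = T r * W" using T_dvd_T_except_mult[OF assms] by blast
  have "G_loc j r * G_loc k r = lin 0 r * lin 0 r * (T_except j r * T_except k r) * (T_except j r * T_except k r)"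
    unfolding G_loc_def by (simp only: power2_eq_square mult_ac)
  also have "\<dots> = (lin 0 r * T r) * T r * (lin 0 r * W * W)"
    unfolding W by (simp only: mult_ac)
  finally show ?thesis unfolding f_at_eq_lin_0_T_T by simp
qed

lemma F_loc_0_square_rel: "f_at r dvd F_loc 0 r * F_loc 0 r - smult (xi n q r) (F_loc 0 r)"
proof -
  have "poly (F_loc 0 r - [:xi n q r:]) (lam q 0 r) = 0" by (simp add: poly_F_loc_lam)
  hence "lin 0 r dvd F_loc 0 r - [:xi n q r:]" unfolding lin_def by (simp only: poly_eq_0_iff_dvd)
  then obtain c where c: "F_loc 0 r - [:xi n q r:] = lin 0 r * c" by (auto simp: dvd_def)
  have "F_loc 0 r * F_loc 0 r - smult (xi n q r) (F_loc 0 r) = F_loc 0 r * (F_loc 0 r - [:xi n q r:])"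
    by (simp add: algebra_simps)
  also have "\<dots> = f_at r * c" unfolding c fx_factorisation by (simp add: F_loc_def mult_ac)
  finally show ?thesis by simp
qed

lemma F_loc_0_idempotent_rel:
  "f_at r dvd smult (inverse (xi n q r)) (F_loc 0 r) * smult (inverse (xi n q r)) (F_loc 0 r)
     - smult (inverse (xi n q r)) (F_loc 0 r)"
proof -
  have "smult (inverse (xi n q r)) (F_loc 0 r) * smult (inverse (xi n q r)) (F_loc 0 r)
      - smult (inverse (xi n q r)) (F_loc 0 r)
      = smult (inverse (xi n q r) ^ 2) (F_loc 0 r * F_loc 0 r - smult (xi n q r) (F_loc 0 r))"
    by (rule poly_ext) (use xi_nonzero[of r] in \<open>simp add: field_simps power2_eq_square\<close>)
  thus ?thesis using F_loc_0_square_rel[of r] by (simp add: dvd_smult)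
qed

lemma G_loc_square_rel: assumes j: "j \<in> {1..h}"
  shows "\<exists>v. f_at r dvd G_loc j r * G_loc j r - (smult (theta n q j r) (G_loc j r) + smult v (F_loc j r))"
proof -
  let ?G = "G_loc j r" and ?t = "theta n q j r"
  have "poly (?G - [:?t:]) (lam q j r) = 0" using j by (simp add: poly_G_loc_lam)
  hence "lin j r dvd ?G - [:?t:]" unfolding lin_def by (simp only: poly_eq_0_iff_dvd)
  then obtain p1 where p1: "?G - [:?t:] = lin j r * p1" by (auto simp: dvd_def)
  define v where "v = poly p1 (lam q j r)"
  have "poly (p1 - [:v:]) (lam q j r) = 0" by (simp add: v_def)
  hence "lin j r dvd p1 - [:v:]" unfolding lin_def by (simp only: poly_eq_0_iff_dvd)
  then obtain p2 where p2: "p1 - [:v:] = lin j r * p2" by (auto simp: dvd_def)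
  have "?G * ?G - (smult ?t ?G + smult v (F_loc j r)) = ?G * ((?G - [:?t:]) - [:v:] * lin j r)"
    unfolding F_loc_eq_lin_G_loc[OF j] by (simp add: algebra_simps)
  also have "\<dots> = ?G * (lin j r * (p1 - [:v:]))" unfolding p1 by (simp add: algebra_simps)
  also have "\<dots> = f_at r * p2" unfolding p2 f_at_eq_lin_sq_G_loc[OF j] by (simp add: power2_eq_square mult_ac)
  finally show ?thesis by (intro exI[of _ v]) simp
qed

lemma G_loc_idempotent_rel: assumes j: "j \<in> {1..h}"
  and hv: "f_at r dvd G_loc j r * G_loc j r - (smult (theta n q j r) (G_loc j r) + smult v (F_loc j r))"
  shows "f_at r dvd smult (inverse (theta n q j r)) (G_loc j r - smult (v / theta n q j r) (F_loc j r))
     * smult (inverse (theta n q j r)) (G_loc j r - smult (v / theta n q j r) (F_loc j r))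
     - smult (inverse (theta n q j r)) (G_loc j r - smult (v / theta n q j r) (F_loc j r))"
proof -
  let ?G = "G_loc j r" and ?F = "F_loc j r" and ?t = "theta n q j r"
  let ?a = "inverse ?t" and ?b = "v / ?t"
  have t0: "?t \<noteq> 0" using theta_nonzero[OF j] .
  let ?E1 = "?G * ?G - (smult ?t ?G + smult v ?F)"
  let ?E2 = "?G * ?F - smult ?t ?F"
  let ?E3 = "?F * ?F"
  have id: "smult ?a (?G - smult ?b ?F) * smult ?a (?G - smult ?b ?F) - smult ?a (?G - smult ?b ?F)
     = smult (?a^2) ?E1 - smult (2 * ?a^2 * ?b) ?E2 + smult (?a^2 * ?b^2) ?E3"
    by (rule poly_ext) (use t0 in \<open>simp add: field_simps power2_eq_square\<close>)
  have fF: "f_at r = lin j r * F_loc j r" using j by (intro f_at_eq_lin_F_loc) auto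
  have e2: "?E2 = lin j r * ?E1 + smult v (f_at r)"
    unfolding fF F_loc_eq_lin_G_loc[OF j] by (simp add: algebra_simps)
  have e3: "?E3 = f_at r * ?G"
    unfolding fF F_loc_eq_lin_G_loc[OF j] by (simp only: mult_ac)
  have d2: "f_at r dvd ?E2" unfolding e2 by (rule dvd_add[OF dvd_mult[OF hv] dvd_smult[OF dvd_refl]])
  have d3: "f_at r dvd ?E3" unfolding e3 by simp
  show ?thesis unfolding id
    by (rule dvd_add[OF dvd_diff[OF dvd_smult[OF hv] dvd_smult[OF d2]] dvd_smult[OF d3]])
qed

lemma F_loc_eigen: "j \<in> {0..h} \<Longrightarrow> F_loc j r * [:0,1:] - smult (lam q j r) (F_loc j r) = f_at r"
  by (subst f_at_eq_lin_F_loc[of j r]) (auto intro!: poly_ext simp: algebra_simps)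

lemma G_loc_eigen: "j \<in> {1..h} \<Longrightarrow> G_loc j r * [:0,1:] - smult (lam q j r) (G_loc j r) - F_loc j r = 0"
  by (subst F_loc_eq_lin_G_loc[of j r]) (auto intro!: poly_ext simp: algebra_simps)

definition E_loc :: "nat \<Rightarrow> nat \<Rightarrow> complex poly" where
  "E_loc j r = (if j = 0 then smult (inverse (xi n q r)) (F_loc 0 r)
      else smult (inverse (theta n q j r)) (G_loc j r - smult (nu n q j r / theta n q j r) (F_loc j r)))"

lemma poly_E_loc_lam: assumes "j \<in> {0..h}" "k \<in> {0..h}"
  shows "poly (E_loc j r) (lam q k r) = (if j = k then 1 else 0)"
proof (cases "j = 0")
  case True thus ?thesis using assms xi_nonzero[of r] by (auto simp: E_loc_def poly_F_loc_lam)
next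
  case False
  hence j: "j \<in> {1..h}" using assms by auto
  thus ?thesis using assms False theta_nonzero[OF j, of r] by (auto simp: E_loc_def poly_F_loc_lam poly_G_loc_lam)
qed

lemma E_loc_orthogonal: assumes "j \<in> {0..h}" "k \<in> {0..h}" "j \<noteq> k"
  shows "f_at r dvd E_loc j r * E_loc k r"
proof -
  have gen: "f_at r dvd E_loc j r * E_loc k r" if jk: "j \<in> {0..h}" "k \<in> {1..h}" "j \<noteq> k" for j k
  proof (cases "j = 0")
    case True
    have "E_loc j r * E_loc k r = smult (inverse (xi n q r)) (F_loc 0 r - smult 0 0) *
        smult (inverse (theta n q k r)) (G_loc k r - smult (nu n q k r / theta n q k r) (F_loc k r))"
      using True jk by (simp add: E_loc_def)
    also have "\<dots> = smult (inverse (xi n q r) * inverse (theta n q k r)) (F_loc 0 r * G_loc k r)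
         - smult (inverse (xi n q r) * inverse (theta n q k r) * (nu n q k r / theta n q k r)) (F_loc 0 r * F_loc k r)"
      by (simp only: smult_diff_mult_smult_diff) simp
    finally show ?thesis using f_at_dvd_F_loc_0_G_loc f_at_dvd_F_loc_0_F_loc[OF jk(2)] by (simp add: dvd_diff dvd_smult)
  next
    case False
    hence j1: "j \<in> {1..h}" using jk by auto
    have eq: "E_loc j r * E_loc k r = smult (inverse (theta n q j r)) (G_loc j r - smult (nu n q j r / theta n q j r) (F_loc j r)) *
        smult (inverse (theta n q k r)) (G_loc k r - smult (nu n q k r / theta n q k r) (F_loc k r))"
      using False jk by (simp add: E_loc_def)
    have d2: "f_at r dvd G_loc j r * F_loc k r" using f_at_dvd_F_loc_G_loc[OF jk(2) j1 jk(3)[symmetric], of r] by (simp add: mult.commute)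
    show ?thesis unfolding eq smult_diff_mult_smult_diff
      by (rule dvd_add[OF dvd_diff[OF dvd_diff[OF dvd_smult[OF f_at_dvd_G_loc_G_loc[OF j1 jk(2,3)]] dvd_smult[OF d2]]
          dvd_smult[OF f_at_dvd_F_loc_G_loc[OF j1 jk(2,3)]]] dvd_smult[OF f_at_dvd_F_loc_F_loc[OF j1 jk(2)]]])
  qed
  show ?thesis
  proof (cases "k = 0")
    case False thus ?thesis using gen assms by auto
  next
    case True
    hence "j \<in> {1..h}" using assms by auto
    thus ?thesis using gen[of k j] assms by (simp add: mult.commute)
  qed
qed


lemma f_at_div_lin: "j \<in> {0..h} \<Longrightarrow> f_at r div [:-lam q j r, 1:] = F_loc j r"
  using f_at_eq_lin_F_loc[of j r] by (simp add: lin_def[symmetric])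

lemma f_at_div_lin_sq: "j \<in> {1..h} \<Longrightarrow> f_at r div [:-lam q j r, 1:] ^ 2 = G_loc j r"
  using f_at_eq_lin_sq_G_loc[of j r] by (simp add: lin_def[symmetric])

lemma component_Fc: assumes "j \<in> {0..h}" "r < n" "r' < n"
  shows "component r' (Fc n q j r) = (if r' = r then F_loc j r else 0)"
  unfolding Fc_def f_at_div_lin[OF assms(1)] by (rule component_xpoly_Eu[OF assms(2,3)])

lemma component_Gc: assumes "j \<in> {1..h}" "r < n" "r' < n"
  shows "component r' (Gc n q j r) = (if r' = r then G_loc j r else 0)"
  unfolding Gc_def f_at_div_lin_sq[OF assms(1)] by (rule component_xpoly_Eu[OF assms(2,3)])

lemma component_Eid: assumes "j \<in> {0..h}" "r < n" "r' < n"
  shows "component r' (Eid n q j r) = (if r' = r then E_loc j r else 0)"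
  using assms by (cases "j = 0") (simp_all add: Eid_def E_loc_def Gp_def component_Fc component_Gc)

lemma component_sum_delta:
  assumes r': "r' < n" and "finite J"
    and X: "\<And>j r. j \<in> J \<Longrightarrow> r < n \<Longrightarrow> component r' (X j r) = (if r' = r then Y j else 0)"
  shows "component r' (\<Sum>(j, r)\<in>J \<times> {0..<n}. sc (c (j, r)) (X j r)) = (\<Sum>j\<in>J. smult (c (j, r')) (Y j))"
proof -
  have "component r' (\<Sum>(j, r)\<in>J \<times> {0..<n}. sc (c (j, r)) (X j r))
      = (\<Sum>j\<in>J. \<Sum>r\<in>{0..<n}. smult (c (j, r)) (component r' (X j r)))"
    unfolding component_sum sum.cartesian_product[symmetric] by (simp add: split_beta)
  also have "\<dots> = (\<Sum>j\<in>J. \<Sum>r\<in>{0..<n}. if r' = r then smult (c (j, r')) (Y j) else 0)"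
    by (intro sum.cong refl) (auto simp: X)
  also have "\<dots> = (\<Sum>j\<in>J. smult (c (j, r')) (Y j))" using r' by simp
  finally show ?thesis .
qed

lemma component_sum_Fc: assumes "r' < n" "J \<subseteq> {0..h}"
  shows "component r' (\<Sum>(j, r)\<in>J \<times> {0..<n}. sc (c (j, r)) (Fc n q j r)) = (\<Sum>j\<in>J. smult (c (j, r')) (F_loc j r'))"
  using assms finite_subset[OF assms(2)] by (intro component_sum_delta) (auto simp: component_Fc)

lemma component_sum_Gc: assumes "r' < n"
  shows "component r' (\<Sum>(j, r)\<in>{1..h} \<times> {0..<n}. sc (c (j, r)) (Gc n q j r)) = (\<Sum>j\<in>{1..h}. smult (c (j, r')) (G_loc j r'))"
  using assms by (intro component_sum_delta) (auto simp: component_Gc)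

lemma component_sum_Eid: assumes "r' < n"
  shows "component r' (\<Sum>(j, r)\<in>{0..h} \<times> {0..<n}. sc (c (j, r)) (Eid n q j r)) = (\<Sum>j\<in>{0..h}. smult (c (j, r')) (E_loc j r'))"
  using assms by (intro component_sum_delta) (auto simp: component_Eid)

section \<open>The Jacobson radical\<close>

lemma A_ideal_0: "A_ideal n S \<Longrightarrow> 0 \<in> S"
  and A_ideal_add: "A_ideal n S \<Longrightarrow> P \<in> S \<Longrightarrow> Q \<in> S \<Longrightarrow> P + Q \<in> S"
  and A_ideal_mult: "A_ideal n S \<Longrightarrow> P \<in> S \<Longrightarrow> R * P \<in> S"
  and A_ideal_congI: "A_ideal n S \<Longrightarrow> P \<in> S \<Longrightarrow> congI n P Q \<Longrightarrow> Q \<in> S"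
  unfolding A_ideal_def by blast+

definition max_ideal :: "nat \<Rightarrow> complex \<Rightarrow> complex poly poly set" where
  "max_ideal r \<mu> = {P. poly (component r P) \<mu> = 0}"

lemma A_maximal_max_ideal: assumes "r < n" "poly (f_at r) \<mu> = 0" shows "A_maximal n (max_ideal r \<mu>)"
  unfolding A_maximal_def
proof (intro conjI allI impI)
  show ideal: "A_ideal n (max_ideal r \<mu>)"
    unfolding A_ideal_def max_ideal_def
  proof (intro conjI ballI allI impI; simp)
    fix P Q assume P: "poly (component r P) \<mu> = 0" and "congI n P Q"
    then obtain K where "component r P - component r Q = f_at r * K"
      using assms(1) by (auto simp: congI_iff_components dvd_def)
    hence "poly (component r P) \<mu> - poly (component r Q) \<mu> = poly (f_at r) \<mu> * poly K \<mu>"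
      by (metis poly_diff poly_mult)
    thus "poly (component r Q) \<mu> = 0" using P assms(2) by simp
  qed
  show "1 \<notin> max_ideal r \<mu>" by (simp add: max_ideal_def)
  fix T assume T: "A_ideal n T \<and> max_ideal r \<mu> \<subseteq> T"
  show "T = max_ideal r \<mu> \<or> 1 \<in> T"
  proof (cases "T = max_ideal r \<mu>")
    case False
    then obtain P where P: "P \<in> T" "P \<notin> max_ideal r \<mu>" using T by blast
    define c where "c = poly (component r P) \<mu>"
    have c0: "c \<noteq> 0" using P by (simp add: max_ideal_def c_def)
    have TI: "A_ideal n T" using T by blast
    have "P - sc c 1 \<in> T" using T by (auto simp: max_ideal_def c_def)
    hence "P + (-1) * (P - sc c 1) \<in> T" by (intro A_ideal_add[OF TI P(1)] A_ideal_mult[OF TI])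
    hence "gpoly [:inverse c:] * sc c 1 \<in> T" by (simp add: A_ideal_mult[OF TI])
    moreover have "gpoly [:inverse c:] * sc c 1 = 1"
      using c0 by (simp add: sc_eq_gpoly_mult gpoly_mult gpoly_def one_pCons)
    ultimately show ?thesis by simp
  qed simp
qed

lemma jac_component_vanishes:
  assumes "P \<in> jac n" "r < n" "k \<in> {0..h}" shows "poly (component r P) (lam q k r) = 0"
proof -
  have "poly (f_at r) (lam q k r) = 0" using f_at_eq_lin_F_loc[OF assms(3), of r] by simp
  hence "A_maximal n (max_ideal r (lam q k r))" by (rule A_maximal_max_ideal[OF assms(2)])
  thus ?thesis using assms(1) by (auto simp: jac_def max_ideal_def)
qed

lemma jac_congI: "P \<in> jac n \<Longrightarrow> congI n P Q \<Longrightarrow> Q \<in> jac n"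
  and jac_add: "P \<in> jac n \<Longrightarrow> Q \<in> jac n \<Longrightarrow> P + Q \<in> jac n"
  and jac_mult: "P \<in> jac n \<Longrightarrow> R * P \<in> jac n"
  and jac_0: "0 \<in> jac n"
  unfolding jac_def A_maximal_def
  by (auto intro: A_ideal_congI A_ideal_add A_ideal_mult A_ideal_0)

lemma jac_sum: "(\<And>i. i \<in> A \<Longrightarrow> f i \<in> jac n) \<Longrightarrow> (\<Sum>i\<in>A. f i) \<in> jac n"
  by (induction A rule: infinite_finite_induct) (auto intro: jac_0 jac_add)

lemma jac_sc: "P \<in> jac n \<Longrightarrow> sc c P \<in> jac n"
  unfolding sc_eq_gpoly_mult by (rule jac_mult)

lemma A_ideal_adjoin:
  assumes S: "A_ideal n S"
  shows "A_ideal n {Q. \<exists>s\<in>S. \<exists>R. congI n Q (s + R * F)}"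
  unfolding A_ideal_def
proof (intro conjI ballI allI impI; clarsimp)
  show "\<exists>s\<in>S. \<exists>R. congI n 0 (s + R * F)"
    using A_ideal_0[OF S] by (intro bexI[of _ 0] exI[of _ 0]) (simp_all add: congI_refl)
next
  fix P Q s1 R1 s2 R2 assume "s1 \<in> S" "congI n P (s1 + R1 * F)" "s2 \<in> S" "congI n Q (s2 + R2 * F)"
  moreover have "congI n (P + Q) ((s1 + s2) + (R1 + R2) * F)"
    using congI_add[OF calculation(2,4)] by (simp add: algebra_simps)
  ultimately show "\<exists>s\<in>S. \<exists>R. congI n (P + Q) (s + R * F)" by (blast intro: A_ideal_add[OF S])
next
  fix P R s1 R1 assume "s1 \<in> S" "congI n P (s1 + R1 * F)"
  moreover have "congI n (R * P) (R * s1 + (R * R1) * F)"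
    using congI_mult_right[OF calculation(2), of R] by (simp add: algebra_simps)
  ultimately show "\<exists>s\<in>S. \<exists>R'. congI n (R * P) (s + R' * F)" by (blast intro: A_ideal_mult[OF S])
next
  fix P Q s1 R1 assume "congI n P Q" "s1 \<in> S" "congI n P (s1 + R1 * F)"
  thus "\<exists>s\<in>S. \<exists>R. congI n Q (s + R * F)" by (blast intro: congI_trans congI_sym)
qed

text \<open>A nilpotent element lies in every maximal ideal: otherwise 1 = s + R F with s \<in> S,
  and then F = F s + R F^2 \<in> S.\<close>

lemma square_zero_in_jac: assumes "congI n (F * F) 0" shows "F \<in> jac n"
  unfolding jac_def
proof (clarify, rule ccontr)
  fix S assume S: "A_maximal n S" and F: "F \<notin> S"
  have SI: "A_ideal n S" using S by (simp add: A_maximal_def)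
  let ?T = "{Q. \<exists>s\<in>S. \<exists>R. congI n Q (s + R * F)}"
  have "S \<subseteq> ?T"
  proof
    fix s assume "s \<in> S"
    thus "s \<in> ?T" using congI_refl[of s] by (auto intro!: bexI[of _ s] exI[of _ 0])
  qed
  moreover have "F \<in> ?T"
    using A_ideal_0[OF SI] by (auto intro!: bexI[of _ 0] exI[of _ 1] simp: congI_refl)
  ultimately have "1 \<in> ?T" using S A_ideal_adjoin[OF SI] F unfolding A_maximal_def by blast
  then obtain s R where sR: "s \<in> S" "congI n 1 (s + R * F)" by blast
  have "F * F \<in> S" using A_ideal_congI[OF SI A_ideal_0[OF SI] congI_sym[OF assms]] .
  hence "F * s + R * (F * F) \<in> S"
    using A_ideal_add[OF SI A_ideal_mult[OF SI sR(1), of F]] A_ideal_mult[OF SI] by blast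
  moreover have "congI n (F * s + R * (F * F)) F"
    using congI_mult_right[OF sR(2), of F] by (auto simp: algebra_simps intro: congI_sym)
  ultimately show False using F A_ideal_congI[OF SI] by blast
qed

lemma Fc_square_zero: "j \<in> {1..h} \<Longrightarrow> r < n \<Longrightarrow> congI n (Fc n q j r * Fc n q j r) 0"
  unfolding congI_0_iff_components using f_at_dvd_F_loc_F_loc by (auto simp: component_Fc)

lemma Fc_in_jac: "j \<in> {1..h} \<Longrightarrow> r < n \<Longrightarrow> Fc n q j r \<in> jac n"
  by (rule square_zero_in_jac[OF Fc_square_zero])

lemma components_vanish_imp_congI_Fc_comb:
  assumes "\<forall>r<n. \<forall>k\<in>{0..h}. poly (component r P) (lam q k r) = 0"
  shows "\<exists>c. congI n P (\<Sum>(j, r)\<in>{1..h} \<times> {0..<n}. sc (c (j, r)) (Fc n q j r))"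
proof -
  have "\<forall>r. \<exists>a. r < n \<longrightarrow> f_at r dvd component r P - (\<Sum>j\<in>{1..h}. smult (a j) (F_loc j r))"
    using assms lin_0_T_dvd_if_vanishing lin_0_T_dvd_imp_F_loc_comb by metis
  then obtain A where A: "\<And>r. r < n \<Longrightarrow> f_at r dvd component r P - (\<Sum>j\<in>{1..h}. smult (A r j) (F_loc j r))"
    by metis
  define c where "c x = A (snd x) (fst x)" for x
  have "congI n P (\<Sum>(j, r)\<in>{1..h} \<times> {0..<n}. sc (c (j, r)) (Fc n q j r))"
    unfolding congI_iff_components
    using A component_sum_Fc[of _ "{1..h}" c] by (simp add: c_def)
  thus ?thesis by blast
qed

lemma components_vanish_imp_jac:
  assumes "\<forall>r<n. \<forall>k\<in>{0..h}. poly (component r P) (lam q k r) = 0"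
  shows "P \<in> jac n"
proof -
  obtain c where "congI n P (\<Sum>(j, r)\<in>{1..h} \<times> {0..<n}. sc (c (j, r)) (Fc n q j r))"
    using components_vanish_imp_congI_Fc_comb[OF assms] by blast
  moreover have "(\<Sum>(j, r)\<in>{1..h} \<times> {0..<n}. sc (c (j, r)) (Fc n q j r)) \<in> jac n"
    by (rule jac_sum) (auto intro!: jac_sc Fc_in_jac)
  ultimately show ?thesis using jac_congI congI_sym by blast
qed

theorem jac_iff_components_vanish: "P \<in> jac n \<longleftrightarrow> (\<forall>r<n. \<forall>k\<in>{0..h}. poly (component r P) (lam q k r) = 0)"
  using jac_component_vanishes components_vanish_imp_jac by blast

lemma jac_eq_Fc_comb: "P \<in> jac n \<Longrightarrow> \<exists>c. congI n P (\<Sum>(j, r)\<in>{1..h} \<times> {0..<n}. sc (c (j, r)) (Fc n q j r))"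
  by (rule components_vanish_imp_congI_Fc_comb) (simp add: jac_iff_components_vanish)

lemma Fc_lin_indep:
  assumes "congI n (\<Sum>(j, r)\<in>{1..h} \<times> {0..<n}. sc (c (j, r)) (Fc n q j r)) 0"
  shows "\<forall>k\<in>{1..h} \<times> {0..<n}. c k = 0"
proof (clarify)
  fix j r assume j: "j \<in> {1..h}" and r: "r \<in> {0..<n}"
  have "FG_comb (\<lambda>i. if i = 0 then 0 else c (i, r)) (\<lambda>i. 0) r = (\<Sum>i\<in>{1..h}. smult (c (i, r)) (F_loc i r))"
    by (simp add: FG_comb_def sum_0_to_h)
  also have "f_at r dvd \<dots>"
    using assms r component_sum_Fc[of r "{1..h}" c] unfolding congI_0_iff_components by auto
  finally have "\<forall>i\<in>{0..h}. (if i = 0 then 0 else c (i, r)) = 0" using FG_comb_indep by blast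
  thus "c (j, r) = 0" using j by force
qed

lemma jac_mult_jac: assumes "P \<in> jac n" "Q \<in> jac n" shows "congI n (P * Q) 0"
  unfolding congI_0_iff_components
proof (intro allI impI)
  fix r assume r: "r < n"
  have "lin 0 r * T r dvd component r P" "lin 0 r * T r dvd component r Q"
    using jac_component_vanishes[OF assms(1) r] jac_component_vanishes[OF assms(2) r]
    by (auto intro: lin_0_T_dvd_if_vanishing)
  hence "(lin 0 r * T r) * (lin 0 r * T r) dvd component r P * component r Q" by (rule mult_dvd_mono)
  moreover have "(lin 0 r * T r) * (lin 0 r * T r) = f_at r * lin 0 r"
    unfolding f_at_eq_lin_0_T_T by (simp only: mult_ac)
  ultimately show "f_at r dvd component r (P * Q)" by (simp add: dvd_mult_left)
qed

section \<open>Idempotents\<close>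

lemma Gc_square_rel_iff: assumes j: "j \<in> {1..h}" and r: "r < n"
  shows "congI n (Gc n q j r * Gc n q j r) (sc (theta n q j r) (Gc n q j r) + sc v (Fc n q j r))
     \<longleftrightarrow> f_at r dvd G_loc j r * G_loc j r - (smult (theta n q j r) (G_loc j r) + smult v (F_loc j r))"
proof -
  have j0: "j \<in> {0..h}" using j by auto
  show ?thesis unfolding congI_iff_components
    using r by (auto simp: component_Fc[OF j0] component_Gc[OF j] dest: spec[of _ r])
qed

lemma Gc_square_rel_ex: "j \<in> {1..h} \<Longrightarrow> r < n \<Longrightarrow>
    \<exists>v. congI n (Gc n q j r * Gc n q j r) (sc (theta n q j r) (Gc n q j r) + sc v (Fc n q j r))"
  using G_loc_square_rel Gc_square_rel_iff by blast

lemma Gc_square_rel_nu: "j \<in> {1..h} \<Longrightarrow> r < n \<Longrightarrow>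
    congI n (Gc n q j r * Gc n q j r) (sc (theta n q j r) (Gc n q j r) + sc (nu n q j r) (Fc n q j r))"
  unfolding nu_def by (rule someI_ex[OF Gc_square_rel_ex])

lemma E_loc_idempotent: assumes "j \<in> {0..h}" "r < n"
  shows "f_at r dvd E_loc j r * E_loc j r - E_loc j r"
proof (cases "j = 0")
  case True thus ?thesis using F_loc_0_idempotent_rel by (simp add: E_loc_def)
next
  case False
  hence j: "j \<in> {1..h}" using assms(1) by auto
  show ?thesis using False G_loc_idempotent_rel[OF j Gc_square_rel_nu[OF j assms(2), THEN
        Gc_square_rel_iff[OF j assms(2), THEN iffD1]]] by (simp add: E_loc_def)
qed

lemma Eid_idempotent: assumes "j \<in> {0..h}" "r < n" shows "idempotentA n (Eid n q j r)"
  unfolding idempotentA_def congI_iff_components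
  using assms E_loc_idempotent by (simp add: component_Eid)

lemma Fc_0_scaled_idempotent: "r < n \<Longrightarrow> idempotentA n (sc (inverse (xi n q r)) (Fc n q 0 r))"
  using Eid_idempotent[of 0 r] by (simp add: Eid_def)

lemma Gp_idempotent: "j \<in> {1..h} \<Longrightarrow> r < n \<Longrightarrow> idempotentA n (Gp n q j r)"
  using Eid_idempotent[of j r] by (simp add: Eid_def)

lemma Eid_orthogonal: assumes "a \<in> {0..h} \<times> {0..<n}" "b \<in> {0..h} \<times> {0..<n}" "a \<noteq> b"
  shows "congI n (Eid n q (fst a) (snd a) * Eid n q (fst b) (snd b)) 0"
  unfolding congI_0_iff_components
proof (intro allI impI)
  fix r' assume r': "r' < n"
  obtain ja ra jb rb where ab: "a = (ja, ra)" "b = (jb, rb)" by (cases a, cases b)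
  have h: "ja \<in> {0..h}" "ra < n" "jb \<in> {0..h}" "rb < n" using assms ab by auto
  show "f_at r' dvd component r' (Eid n q (fst a) (snd a) * Eid n q (fst b) (snd b))"
  proof (cases "ra = r' \<and> rb = r'")
    case True
    hence "ja \<noteq> jb" using assms(3) ab by auto
    thus ?thesis using True h E_loc_orthogonal[of ja jb r'] ab r' by (simp add: component_Eid)
  qed (use h ab r' in \<open>auto simp: component_Eid\<close>)
qed

lemma poly_sum_E_loc_lam: assumes "k \<in> {0..h}"
  shows "poly (\<Sum>j\<in>{0..h}. smult (c j) (E_loc j r)) (lam q k r) = c k"
proof -
  have "poly (\<Sum>j\<in>{0..h}. smult (c j) (E_loc j r)) (lam q k r) = (\<Sum>j\<in>{0..h}. c j * (if j = k then 1 else 0))"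
    unfolding poly_sum by (rule sum.cong[OF refl]) (use assms in \<open>simp add: poly_E_loc_lam\<close>)
  also have "\<dots> = c k" using assms by (simp add: if_distrib cong: if_cong)
  finally show ?thesis .
qed

lemma Eid_span_mod_jac: "\<exists>c. P - (\<Sum>(j, r)\<in>{0..h} \<times> {0..<n}. sc (c (j, r)) (Eid n q j r)) \<in> jac n"
proof -
  define c where "c x = poly (component (snd x) P) (lam q (fst x) (snd x))" for x
  have "P - (\<Sum>(j, r)\<in>{0..h} \<times> {0..<n}. sc (c (j, r)) (Eid n q j r)) \<in> jac n"
    unfolding jac_iff_components_vanish
  proof (intro allI impI ballI)
    fix r k assume r: "r < n" and k: "k \<in> {0..h}"
    show "poly (component r (P - (\<Sum>(j, r)\<in>{0..h} \<times> {0..<n}. sc (c (j, r)) (Eid n q j r)))) (lam q k r) = 0"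
      using poly_sum_E_loc_lam[OF k, of "\<lambda>j. c (j, r)" r]
      by (simp only: component_simps component_sum_Eid[OF r] poly_diff) (simp add: c_def)
  qed
  thus ?thesis by blast
qed

lemma Eid_lin_indep_mod_jac:
  assumes "(\<Sum>(j, r)\<in>{0..h} \<times> {0..<n}. sc (c (j, r)) (Eid n q j r)) \<in> jac n"
  shows "\<forall>k\<in>{0..h} \<times> {0..<n}. c k = 0"
proof (clarify)
  fix j r assume j: "j \<in> {0..h}" and r: "r \<in> {0..<n}"
  have "poly (component r (\<Sum>(j, r)\<in>{0..h} \<times> {0..<n}. sc (c (j, r)) (Eid n q j r))) (lam q j r) = 0"
    using assms r j unfolding jac_iff_components_vanish by simp
  thus "c (j, r) = 0" using poly_sum_E_loc_lam[OF j, of "\<lambda>i. c (i, r)" r] r by (simp add: component_sum_Eid)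
qed

section \<open>Coordinates in the basis of simple modules\<close>

definition W_cls :: "nat \<Rightarrow> complex poly poly" where
  "W_cls l = (\<Sum>i\<in>{0..(l - 1) div 2}.
     sc ((-1) ^ i * of_nat ((l - 1 - i) choose i)) (Gv ^ i * Xv ^ (l - 1 - 2 * i)))"

lemma Vcls_eq_W_cls: "Vcls l s = Gv ^ s * W_cls l" by (simp add: Vcls_def W_cls_def)

definition w_loc :: "nat \<Rightarrow> complex \<Rightarrow> complex poly" where
  "w_loc l z = (\<Sum>i\<in>{0..(l - 1) div 2}. monom ((-1) ^ i * of_nat ((l - 1 - i) choose i) * z ^ i) (l - 1 - 2 * i))"

lemma eval_g_W_cls: "eval_g z (W_cls l) = w_loc l z"
proof -
  have "eval_g z (W_cls l) = (\<Sum>i\<in>{0..(l - 1) div 2}.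
      smult ((-1) ^ i * of_nat ((l - 1 - i) choose i)) ([:z:] ^ i * [:0, 1:] ^ (l - 1 - 2 * i)))"
    by (simp add: W_cls_def)
  also have "\<dots> = w_loc l z" unfolding w_loc_def
    by (rule sum.cong[OF refl]) (simp add: const_poly_power monom_altdef)
  finally show ?thesis .
qed

abbreviation Vcls_at :: "nat \<times> nat \<Rightarrow> complex poly poly" where
  "Vcls_at k \<equiv> Vcls (fst k) (snd k)"

lemma triangular_w_loc: "triangular N (\<lambda>l. w_loc l z)"
  unfolding triangular_def
proof (intro ballI conjI allI impI)
  fix l assume l: "l \<in> {1..N}"
  have "coeff (w_loc l z) (l - 1) = (\<Sum>i\<in>{0..(l - 1) div 2}. if i = 0 then 1 else 0)"
    unfolding w_loc_def coeff_sum by (rule sum.cong[OF refl]) (auto simp: coeff_monom)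
  thus "coeff (w_loc l z) (l - 1) = 1" by simp
  fix k assume "l \<le> k"
  thus "coeff (w_loc l z) k = 0" using l by (auto simp: w_loc_def coeff_sum coeff_monom intro!: sum.neutral)
qed

lemma component_Vcls: "component r (Vcls l s) = smult ((q ^ (2 * r)) ^ s) (w_loc l (q ^ (2 * r)))"
  by (simp add: component_def Vcls_eq_W_cls eval_g_W_cls const_poly_power)

lemma component_sum_Vcls: "component r (\<Sum>k\<in>idxV n. sc (c k) (Vcls_at k))
   = (\<Sum>l\<in>{1..n}. smult (\<Sum>s\<in>{0..<n}. c (l, s) * (q ^ (2 * r)) ^ s) (w_loc l (q ^ (2 * r))))"
proof -
  have "component r (\<Sum>k\<in>idxV n. sc (c k) (Vcls_at k))
      = (\<Sum>k\<in>{1..n} \<times> {0..<n}. smult (c k * (q ^ (2 * r)) ^ snd k) (w_loc (fst k) (q ^ (2 * r))))"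
    unfolding component_sum idxV_def by (rule sum.cong[OF refl]) (simp add: component_Vcls)
  also have "\<dots> = (\<Sum>l\<in>{1..n}. \<Sum>s\<in>{0..<n}. smult (c (l, s) * (q ^ (2 * r)) ^ s) (w_loc l (q ^ (2 * r))))"
    by (simp add: sum.cartesian_product split_beta)
  also have "\<dots> = (\<Sum>l\<in>{1..n}. smult (\<Sum>s\<in>{0..<n}. c (l, s) * (q ^ (2 * r)) ^ s) (w_loc l (q ^ (2 * r))))"
    by (simp add: smult_sum)
  finally show ?thesis .
qed

lemma q_double_power_comm: "(q ^ (2 * r)) ^ s = (q ^ (2 * s)) ^ r"
  by (simp only: power_mult[symmetric] mult_ac)

lemma q_double_power_swap: "(q ^ (2 * r)) ^ s * inverse ((q ^ (2 * r)) ^ t) = (q ^ (2 * s) * inverse (q ^ (2 * t))) ^ r"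
  by (simp only: q_double_power_comm[of r s] q_double_power_comm[of r t] power_mult_distrib power_inverse)

lemma character_sum_eq_0_imp_0: assumes "\<forall>r<n. (\<Sum>s\<in>{0..<n}. a s * (q ^ (2 * r)) ^ s) = 0" "t < n"
  shows "a t = 0"
proof -
  have tm: "inverse (of_nat n) * (a s * (q ^ (2 * r)) ^ s) * inverse ((q ^ (2 * r)) ^ t)
      = a s * (inverse (of_nat n) * (q ^ (2 * s) * inverse (q ^ (2 * t))) ^ r)" for r s
  proof -
    have "inverse (of_nat n) * (a s * (q ^ (2 * r)) ^ s) * inverse ((q ^ (2 * r)) ^ t)
        = a s * (inverse (of_nat n) * ((q ^ (2 * r)) ^ s * inverse ((q ^ (2 * r)) ^ t)))"
      by (simp only: mult_ac)
    thus ?thesis by (simp only: q_double_power_swap)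
  qed
  have "0 = (\<Sum>r<n. inverse (of_nat n) * (\<Sum>s\<in>{0..<n}. a s * (q ^ (2 * r)) ^ s) * inverse ((q ^ (2 * r)) ^ t))"
    using assms(1) by simp
  also have "\<dots> = (\<Sum>r<n. \<Sum>s<n. inverse (of_nat n) * (a s * (q ^ (2 * r)) ^ s) * inverse ((q ^ (2 * r)) ^ t))"
    by (simp only: sum_distrib_left sum_distrib_right lessThan_atLeast0)
  also have "\<dots> = (\<Sum>r<n. \<Sum>s<n. a s * (inverse (of_nat n) * (q ^ (2 * s) * inverse (q ^ (2 * t))) ^ r))"
    by (simp only: tm)
  also have "\<dots> = (\<Sum>s<n. \<Sum>r<n. a s * (inverse (of_nat n) * (q ^ (2 * s) * inverse (q ^ (2 * t))) ^ r))"
    by (rule sum.swap)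
  also have "\<dots> = (\<Sum>s<n. a s * (inverse (of_nat n) * (\<Sum>r<n. (q ^ (2 * s) * inverse (q ^ (2 * t))) ^ r)))"
    by (simp add: sum_distrib_left mult.assoc)
  also have "\<dots> = (\<Sum>s<n. a s * (if s = t then 1 else 0))"
    by (rule sum.cong[OF refl]) (use assms(2) character_orthogonality in auto)
  also have "\<dots> = a t" using assms(2) by (simp add: if_distrib cong: if_cong)
  finally show ?thesis by simp
qed

lemma inverse_character_sum: assumes "r < n"
  shows "(\<Sum>s\<in>{0..<n}. (inverse (of_nat n) * (\<Sum>r'<n. d r' * inverse ((q ^ (2 * r')) ^ s))) * (q ^ (2 * r)) ^ s) = d r"
proof -
  have "(\<Sum>s\<in>{0..<n}. (inverse (of_nat n) * (\<Sum>r'<n. d r' * inverse ((q ^ (2 * r')) ^ s))) * (q ^ (2 * r)) ^ s)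
      = (\<Sum>s<n. \<Sum>r'<n. d r' * (inverse (of_nat n) * (q ^ (2 * r) * inverse (q ^ (2 * r'))) ^ s))"
    by (simp add: lessThan_atLeast0[symmetric] sum_distrib_left sum_distrib_right power_mult_distrib power_inverse mult_ac)
  also have "\<dots> = (\<Sum>r'<n. \<Sum>s<n. d r' * (inverse (of_nat n) * (q ^ (2 * r) * inverse (q ^ (2 * r'))) ^ s))"
    by (rule sum.swap)
  also have "\<dots> = (\<Sum>r'<n. d r' * (inverse (of_nat n) * (\<Sum>s<n. (q ^ (2 * r) * inverse (q ^ (2 * r'))) ^ s)))"
    by (simp add: sum_distrib_left mult.assoc)
  also have "\<dots> = (\<Sum>r'<n. d r' * (if r = r' then 1 else 0))"
    by (rule sum.cong[OF refl]) (use assms character_orthogonality in auto)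
  also have "\<dots> = d r" using assms by (simp add: if_distrib cong: if_cong)
  finally show ?thesis .
qed

lemma Vcls_lin_indep: assumes "congI n (\<Sum>k\<in>idxV n. sc (c k) (Vcls_at k)) 0"
  shows "\<forall>k\<in>idxV n. c k = 0"
proof -
  have "(\<Sum>s\<in>{0..<n}. c (l, s) * (q ^ (2 * r)) ^ s) = 0" if r: "r < n" and l: "l \<in> {1..n}" for r l
  proof -
    let ?p = "\<Sum>l\<in>{1..n}. smult (\<Sum>s\<in>{0..<n}. c (l, s) * (q ^ (2 * r)) ^ s) (w_loc l (q ^ (2 * r)))"
    have "f_at r dvd ?p" using assms r by (simp add: congI_0_iff_components component_sum_Vcls)
    moreover have "\<forall>k\<ge>degree (f_at r). coeff ?p k = 0"
      using triangular_w_loc[of n] by (auto simp: degree_f_at triangular_def coeff_sum intro!: sum.neutral)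
    ultimately have "?p = 0" using f_at_nonzero by (intro dvd_imp_eq_0_if_degree_less)
    from triangular_lin_indep[OF triangular_w_loc this] show ?thesis using l by blast
  qed
  hence "c (l, s) = 0" if "l \<in> {1..n}" "s < n" for l s
    using that character_sum_eq_0_imp_0[of "\<lambda>s. c (l, s)" s] by blast
  thus ?thesis unfolding idxV_def by auto
qed

definition is_coord :: "complex poly poly \<Rightarrow> (nat \<times> nat \<Rightarrow> complex) \<Rightarrow> bool" where
  "is_coord P c \<longleftrightarrow> (\<forall>k. k \<notin> idxV n \<longrightarrow> c k = 0) \<and> congI n P (\<Sum>k\<in>idxV n. sc (c k) (Vcls_at k))"

lemma mod_f_at_in_w_loc_span:
  "\<exists>d. p mod f_at r = (\<Sum>l\<in>{1..n}. smult (d l) (w_loc l (q ^ (2 * r))))"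
proof (rule triangular_span[OF triangular_w_loc], intro allI impI)
  fix k assume k: "n \<le> k"
  show "coeff (p mod f_at r) k = 0"
  proof (cases "p mod f_at r = 0")
    case False
    hence "degree (p mod f_at r) < n" using degree_mod_less'[OF f_at_nonzero False] degree_f_at by simp
    thus ?thesis using k by (simp add: coeff_eq_0)
  qed simp
qed

lemma Vcls_span: "\<exists>c. is_coord P c"
proof -
  have "\<forall>r. \<exists>d. component r P mod f_at r = (\<Sum>l\<in>{1..n}. smult (d l) (w_loc l (q ^ (2 * r))))"
    using mod_f_at_in_w_loc_span by blast
  then obtain D where D: "\<And>r. component r P mod f_at r = (\<Sum>l\<in>{1..n}. smult (D r l) (w_loc l (q ^ (2 * r))))"
    by metis
  define c where "c k = (if k \<in> idxV n
      then inverse (of_nat n) * (\<Sum>r'<n. D r' (fst k) * inverse ((q ^ (2 * r')) ^ snd k)) else 0)" for k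
  have "congI n P (\<Sum>k\<in>idxV n. sc (c k) (Vcls_at k))"
    unfolding congI_iff_components
  proof (intro allI impI)
    fix r assume r: "r < n"
    have "component r (\<Sum>k\<in>idxV n. sc (c k) (Vcls_at k))
        = (\<Sum>l\<in>{1..n}. smult (\<Sum>s\<in>{0..<n}. c (l, s) * (q ^ (2 * r)) ^ s) (w_loc l (q ^ (2 * r))))"
      by (rule component_sum_Vcls)
    also have "\<dots> = (\<Sum>l\<in>{1..n}. smult (D r l) (w_loc l (q ^ (2 * r))))"
    proof (rule sum.cong[OF refl])
      fix l assume l: "l \<in> {1..n}"
      have "(\<Sum>s\<in>{0..<n}. c (l, s) * (q ^ (2 * r)) ^ s)
          = (\<Sum>s\<in>{0..<n}. (inverse (of_nat n) * (\<Sum>r'<n. D r' l * inverse ((q ^ (2 * r')) ^ s))) * (q ^ (2 * r)) ^ s)"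
        by (rule sum.cong[OF refl]) (use l in \<open>simp add: c_def idxV_def\<close>)
      also have "\<dots> = D r l" by (rule inverse_character_sum[OF r])
      finally show "smult (\<Sum>s\<in>{0..<n}. c (l, s) * (q ^ (2 * r)) ^ s) (w_loc l (q ^ (2 * r)))
          = smult (D r l) (w_loc l (q ^ (2 * r)))" by simp
    qed
    also have "\<dots> = component r P mod f_at r" by (rule D[symmetric])
    finally show "f_at r dvd component r P - component r (\<Sum>k\<in>idxV n. sc (c k) (Vcls_at k))"
      by (simp add: minus_mod_eq_mult_div)
  qed
  moreover have "\<forall>k. k \<notin> idxV n \<longrightarrow> c k = 0" by (simp add: c_def)
  ultimately show ?thesis unfolding is_coord_def by blast
qed

lemma is_coord_unique: assumes "is_coord P c" "is_coord P c'" shows "c = c'"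
proof -
  have "congI n (\<Sum>k\<in>idxV n. sc (c k) (Vcls_at k)) (\<Sum>k\<in>idxV n. sc (c' k) (Vcls_at k))"
  proof -
    have a: "congI n P (\<Sum>k\<in>idxV n. sc (c k) (Vcls_at k))" and b: "congI n P (\<Sum>k\<in>idxV n. sc (c' k) (Vcls_at k))"
      using assms unfolding is_coord_def by blast+
    show ?thesis by (rule congI_trans[OF congI_sym[OF a] b])
  qed
  moreover have "(\<Sum>k\<in>idxV n. sc (c k) (Vcls_at k)) - (\<Sum>k\<in>idxV n. sc (c' k) (Vcls_at k))
      = (\<Sum>k\<in>idxV n. sc (c k - c' k) (Vcls_at k))"
    by (simp add: sum_subtractf[symmetric] sc_def smult_diff_left[symmetric] diff_to_poly)
  ultimately have "congI n (\<Sum>k\<in>idxV n. sc (c k - c' k) (Vcls_at k)) 0"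
    by (simp add: congI_iff_in_ideal)
  hence "\<forall>k\<in>idxV n. c k - c' k = 0" by (rule Vcls_lin_indep)
  with assms show ?thesis unfolding is_coord_def by (auto intro!: ext)
qed

lemma is_coord_coord: "is_coord P (coord n P)"
proof -
  obtain c where c: "is_coord P c" using Vcls_span by blast
  have "\<exists>!c. is_coord P c" using c is_coord_unique by blast
  hence "is_coord P (THE c. is_coord P c)" by (rule theI')
  thus ?thesis unfolding coord_def is_coord_def .
qed

lemma coord_eqI: "is_coord P c \<Longrightarrow> coord n P = c"
  using is_coord_unique is_coord_coord by blast

lemma coord_outside: "k \<notin> idxV n \<Longrightarrow> coord n P k = 0"
  using is_coord_coord[of P] unfolding is_coord_def by blast

lemma coord_congI: assumes "congI n P Q" shows "coord n P = coord n Q"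
proof (rule coord_eqI)
  have "(\<forall>k. k \<notin> idxV n \<longrightarrow> coord n Q k = 0)" "congI n Q (\<Sum>k\<in>idxV n. sc (coord n Q k) (Vcls_at k))"
    using is_coord_coord[of Q] unfolding is_coord_def by blast+
  thus "is_coord P (coord n Q)" unfolding is_coord_def using congI_trans[OF assms] by blast
qed

lemma coord_lincomb: "finite S \<Longrightarrow> coord n (\<Sum>x\<in>S. sc (a x) (X x)) = (\<lambda>k. \<Sum>x\<in>S. a x * coord n (X x) k)"
proof -
  assume S: "finite S"
  show ?thesis
  proof (rule coord_eqI, unfold is_coord_def, intro conjI allI impI)
    fix k assume "k \<notin> idxV n" thus "(\<Sum>x\<in>S. a x * coord n (X x) k) = 0" by (simp add: coord_outside)
  next
    have cx: "congI n (X x) (\<Sum>k\<in>idxV n. sc (coord n (X x) k) (Vcls_at k))" for x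
      using is_coord_coord[of "X x"] unfolding is_coord_def by blast
    have "congI n (\<Sum>x\<in>S. sc (a x) (X x)) (\<Sum>x\<in>S. sc (a x) (\<Sum>k\<in>idxV n. sc (coord n (X x) k) (Vcls_at k)))"
      by (rule congI_sum, rule congI_sc, rule cx)
    also have "(\<Sum>x\<in>S. sc (a x) (\<Sum>k\<in>idxV n. sc (coord n (X x) k) (Vcls_at k)))
        = (\<Sum>x\<in>S. \<Sum>k\<in>idxV n. sc (a x * coord n (X x) k) (Vcls_at k))"
      by (simp only: sc_sum_right sc_sc)
    also have "\<dots> = (\<Sum>k\<in>idxV n. \<Sum>x\<in>S. sc (a x * coord n (X x) k) (Vcls_at k))"
      by (rule sum.swap)
    also have "\<dots> = (\<Sum>k\<in>idxV n. sc (\<Sum>x\<in>S. a x * coord n (X x) k) (Vcls_at k))"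
      by (simp only: sc_sum_left)
    finally show "congI n (\<Sum>x\<in>S. sc (a x) (X x)) (\<Sum>k\<in>idxV n. sc (\<Sum>x\<in>S. a x * coord n (X x) k) (Vcls_at k))" .
  qed
qed

lemma coord_add: "coord n (P + Q) = (\<lambda>k. coord n P k + coord n Q k)"
proof (rule coord_eqI, unfold is_coord_def, intro conjI allI impI)
  fix k assume "k \<notin> idxV n" thus "coord n P k + coord n Q k = 0" by (simp add: coord_outside)
next
  have "congI n (P + Q) ((\<Sum>k\<in>idxV n. sc (coord n P k) (Vcls_at k)) + (\<Sum>k\<in>idxV n. sc (coord n Q k) (Vcls_at k)))"
    by (intro congI_add) (use is_coord_coord in \<open>simp_all add: is_coord_def\<close>)
  thus "congI n (P + Q) (\<Sum>k\<in>idxV n. sc (coord n P k + coord n Q k) (Vcls_at k))"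
    by (simp add: sum.distrib[symmetric] sc_add_left)
qed

lemma coord_sc: "coord n (sc c P) = (\<lambda>k. c * coord n P k)"
proof (rule coord_eqI, unfold is_coord_def, intro conjI allI impI)
  fix k assume "k \<notin> idxV n" thus "c * coord n P k = 0" by (simp add: coord_outside)
next
  have "congI n (sc c P) (sc c (\<Sum>k\<in>idxV n. sc (coord n P k) (Vcls_at k)))"
    by (intro congI_sc) (use is_coord_coord in \<open>simp_all add: is_coord_def\<close>)
  thus "congI n (sc c P) (\<Sum>k\<in>idxV n. sc (c * coord n P k) (Vcls_at k))"
    by (simp add: sc_sum_right sc_sc)
qed

lemma vecmat_McKay_coord: "vecmat n (coord n P) (McKay n) = coord n (P * Xv)"
proof -
  have "congI n (P * Xv) ((\<Sum>k\<in>idxV n. sc (coord n P k) (Vcls_at k)) * Xv)"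
    by (intro congI_mult_right) (use is_coord_coord in \<open>simp_all add: is_coord_def\<close>)
  also have "(\<Sum>k\<in>idxV n. sc (coord n P k) (Vcls_at k)) * Xv = (\<Sum>k\<in>idxV n. sc (coord n P k) (Vcls_at k * Xv))"
    by (simp add: sum_distrib_right sc_def)
  finally have "coord n (P * Xv) = coord n (\<Sum>k\<in>idxV n. sc (coord n P k) (Vcls_at k * Xv))"
    by (rule coord_congI)
  also have "\<dots> = (\<lambda>k'. \<Sum>k\<in>idxV n. coord n P k * coord n (Vcls_at k * Xv) k')"
    by (rule coord_lincomb) (simp add: idxV_def)
  finally show ?thesis by (simp add: vecmat_def McKay_def fun_eq_iff)
qed

section \<open>Left eigenvectors of the McKay matrix\<close>

lemma Fc_times_x: assumes "j \<in> {0..h}" "r < n"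
  shows "congI n (Fc n q j r * Xv) (sc (lam q j r) (Fc n q j r))"
  unfolding congI_iff_components
  using F_loc_eigen[OF assms(1), of r] assms by (auto simp: component_Fc)

lemma Gc_times_x: assumes "j \<in> {1..h}" "r < n"
  shows "congI n (Gc n q j r * Xv) (sc (lam q j r) (Gc n q j r) + Fc n q j r)"
proof -
  have j0: "j \<in> {0..h}" using assms(1) by auto
  show ?thesis unfolding congI_iff_components
    using G_loc_eigen[OF assms(1), of r] assms by (auto simp: component_Fc[OF j0] component_Gc algebra_simps)
qed

lemma coord_Fc_left_eigenvector: assumes "j \<in> {0..h}" "r < n"
  shows "vecmat n (coord n (Fc n q j r)) (McKay n) = (\<lambda>k. lam q j r * coord n (Fc n q j r) k)"
  using coord_congI[OF Fc_times_x[OF assms]] by (simp add: vecmat_McKay_coord coord_sc)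

lemma coord_Gc_generalised_left_eigenvector: assumes "j \<in> {1..h}" "r < n"
  shows "vecmat n (coord n (Gc n q j r)) (McKay n)
      = (\<lambda>k. lam q j r * coord n (Gc n q j r) k + coord n (Fc n q j r) k)"
  using coord_congI[OF Gc_times_x[OF assms]] by (simp add: vecmat_McKay_coord coord_sc coord_add)

definition FG_cls_comb :: "(nat \<times> nat \<Rightarrow> complex) \<Rightarrow> (nat \<times> nat \<Rightarrow> complex) \<Rightarrow> complex poly poly" where
  "FG_cls_comb a b = (\<Sum>(j, r)\<in>{0..h} \<times> {0..<n}. sc (a (j, r)) (Fc n q j r))
     + (\<Sum>(j, r)\<in>{1..h} \<times> {0..<n}. sc (b (j, r)) (Gc n q j r))"

lemma coord_FG_cls_comb: "coord n (FG_cls_comb a b) k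
    = (\<Sum>(j, r)\<in>{0..h} \<times> {0..<n}. a (j, r) * coord n (Fc n q j r) k)
      + (\<Sum>(j, r)\<in>{1..h} \<times> {0..<n}. b (j, r) * coord n (Gc n q j r) k)"
  unfolding FG_cls_comb_def coord_add
  using coord_lincomb[of "{0..h} \<times> {0..<n}" a "\<lambda>x. Fc n q (fst x) (snd x)"]
    coord_lincomb[of "{1..h} \<times> {0..<n}" b "\<lambda>x. Gc n q (fst x) (snd x)"]
  by (simp add: split_beta)

lemma component_FG_cls_comb: assumes "r < n"
  shows "component r (FG_cls_comb a b) = FG_comb (\<lambda>j. a (j, r)) (\<lambda>j. b (j, r)) r"
  unfolding FG_cls_comb_def FG_comb_def component_simps(1) component_sum_Gc[OF assms]
  using component_sum_Fc[OF assms, of "{0..h}" a] by simp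

lemma coord_FG_span: "\<exists>a b. \<forall>k\<in>idxV n. w k =
    (\<Sum>(j, r)\<in>{0..h} \<times> {0..<n}. a (j, r) * coord n (Fc n q j r) k)
    + (\<Sum>(j, r)\<in>{1..h} \<times> {0..<n}. b (j, r) * coord n (Gc n q j r) k)"
proof -
  define P where "P = (\<Sum>k\<in>idxV n. sc (w k) (Vcls_at k))"
  have cP: "coord n P = (\<lambda>k. if k \<in> idxV n then w k else 0)"
    unfolding P_def by (rule coord_eqI) (simp add: is_coord_def congI_refl cong: sum.cong)
  have "\<forall>r. \<exists>ab. r < n \<longrightarrow> f_at r dvd component r P - FG_comb (fst ab) (snd ab) r"
    using FG_comb_span by (metis fst_conv snd_conv)
  then obtain AB where AB: "\<And>r. r < n \<Longrightarrow> f_at r dvd component r P - FG_comb (fst (AB r)) (snd (AB r)) r"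
    by metis
  define a where "a x = fst (AB (snd x)) (fst x)" for x
  define b where "b x = snd (AB (snd x)) (fst x)" for x
  have "congI n P (FG_cls_comb a b)"
    unfolding congI_iff_components using AB by (simp add: component_FG_cls_comb a_def b_def)
  hence "coord n P = coord n (FG_cls_comb a b)" by (rule coord_congI)
  hence "\<forall>k\<in>idxV n. w k = coord n (FG_cls_comb a b) k" using cP by metis
  thus ?thesis unfolding coord_FG_cls_comb by blast
qed

lemma coord_FG_lin_indep:
  assumes "\<forall>k\<in>idxV n. (\<Sum>(j, r)\<in>{0..h} \<times> {0..<n}. a (j, r) * coord n (Fc n q j r) k)
      + (\<Sum>(j, r)\<in>{1..h} \<times> {0..<n}. b (j, r) * coord n (Gc n q j r) k) = 0"
  shows "(\<forall>k\<in>{0..h} \<times> {0..<n}. a k = 0) \<and> (\<forall>k\<in>{1..h} \<times> {0..<n}. b k = 0)"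
proof -
  have "coord n (FG_cls_comb a b) = (\<lambda>k. 0)"
    using assms coord_outside unfolding coord_FG_cls_comb[symmetric] by (metis ext)
  hence "congI n (FG_cls_comb a b) 0"
    using is_coord_coord[of "FG_cls_comb a b"] by (simp add: is_coord_def)
  hence "f_at r dvd FG_comb (\<lambda>j. a (j, r)) (\<lambda>j. b (j, r)) r" if "r < n" for r
    using that by (simp add: congI_0_iff_components component_FG_cls_comb)
  hence "(\<forall>j\<in>{0..h}. a (j, r) = 0) \<and> (\<forall>j\<in>{1..h}. b (j, r) = 0)" if "r < n" for r
    using that FG_comb_indep by blast
  thus ?thesis by auto
qed

end

theorem mainTheorem19:
  fixes n h :: nat and q :: complex
  assumes "h \<ge> 1" and "n = 2 * h + 1"
    and "q ^ n = 1" and "\<forall>k. 0 < k \<and> k < n \<longrightarrow> q ^ k \<noteq> 1"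
  shows
   \<comment> \<open>(a)\<close>
   "(\<forall>j\<in>{1..h}. \<forall>r\<in>{0..<n}. Fc n q j r \<in> jac n)
    \<and> (\<forall>P\<in>jac n. \<exists>c. congI n P (\<Sum>(j,r)\<in>{1..h}\<times>{0..<n}. sc (c (j,r)) (Fc n q j r)))
    \<and> (\<forall>c. congI n (\<Sum>(j,r)\<in>{1..h}\<times>{0..<n}. sc (c (j,r)) (Fc n q j r)) 0
          \<longrightarrow> (\<forall>k\<in>{1..h}\<times>{0..<n}. c k = 0))
    \<and> (\<forall>P\<in>jac n. \<forall>Q\<in>jac n. congI n (P * Q) 0)
   \<comment> \<open>(b)\<close>
    \<and> (\<forall>r\<in>{0..<n}. xi n q r \<noteq> 0 \<and> idempotentA n (sc (inverse (xi n q r)) (Fc n q 0 r)))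
    \<and> (\<forall>j\<in>{1..h}. \<forall>r\<in>{0..<n}. theta n q j r \<noteq> 0
          \<and> (\<exists>v. congI n (Gc n q j r * Gc n q j r)
                      (sc (theta n q j r) (Gc n q j r) + sc v (Fc n q j r)))
          \<and> congI n (Gc n q j r * Gc n q j r)
                      (sc (theta n q j r) (Gc n q j r) + sc (nu n q j r) (Fc n q j r))
          \<and> idempotentA n (Gp n q j r))
    \<and> (\<forall>a\<in>{0..h}\<times>{0..<n}. \<forall>b\<in>{0..h}\<times>{0..<n}. a \<noteq> b \<longrightarrow>
          congI n (Eid n q (fst a) (snd a) * Eid n q (fst b) (snd b)) 0)
    \<and> (\<forall>P. \<exists>c. P - (\<Sum>(j,r)\<in>{0..h}\<times>{0..<n}. sc (c (j,r)) (Eid n q j r)) \<in> jac n)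
    \<and> (\<forall>c. (\<Sum>(j,r)\<in>{0..h}\<times>{0..<n}. sc (c (j,r)) (Eid n q j r)) \<in> jac n
          \<longrightarrow> (\<forall>k\<in>{0..h}\<times>{0..<n}. c k = 0))
   \<comment> \<open>(c)\<close>
    \<and> (\<forall>j\<in>{0..h}. \<forall>r\<in>{0..<n}. \<forall>k'\<in>idxV n.
          vecmat n (coord n (Fc n q j r)) (McKay n) k' = lam q j r * coord n (Fc n q j r) k')
    \<and> (\<forall>j\<in>{1..h}. \<forall>r\<in>{0..<n}. \<forall>k'\<in>idxV n.
          vecmat n (coord n (Gc n q j r)) (McKay n) k'
            = lam q j r * coord n (Gc n q j r) k' + coord n (Fc n q j r) k')
    \<and> (\<forall>w. \<exists>a b. \<forall>k'\<in>idxV n. w k' =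
          (\<Sum>(j,r)\<in>{0..h}\<times>{0..<n}. a (j,r) * coord n (Fc n q j r) k')
          + (\<Sum>(j,r)\<in>{1..h}\<times>{0..<n}. b (j,r) * coord n (Gc n q j r) k'))
    \<and> (\<forall>a b. (\<forall>k'\<in>idxV n.
          (\<Sum>(j,r)\<in>{0..h}\<times>{0..<n}. a (j,r) * coord n (Fc n q j r) k')
          + (\<Sum>(j,r)\<in>{1..h}\<times>{0..<n}. b (j,r) * coord n (Gc n q j r) k') = 0)
          \<longrightarrow> (\<forall>k\<in>{0..h}\<times>{0..<n}. a k = 0) \<and> (\<forall>k\<in>{1..h}\<times>{0..<n}. b k = 0))"
proof -
  interpret odd_root_of_unity n h q using assms by unfold_locales auto
  show ?thesis
    apply (intro conjI)
    subgoal using Fc_in_jac by simp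
    subgoal using jac_eq_Fc_comb by blast
    subgoal using Fc_lin_indep by blast
    subgoal using jac_mult_jac by blast
    subgoal using xi_nonzero Fc_0_scaled_idempotent by simp
    subgoal using theta_nonzero Gc_square_rel_ex Gc_square_rel_nu Gp_idempotent by simp
    subgoal using Eid_orthogonal by blast
    subgoal using Eid_span_mod_jac by blast
    subgoal using Eid_lin_indep_mod_jac by blast
    subgoal using coord_Fc_left_eigenvector by simp
    subgoal using coord_Gc_generalised_left_eigenvector by simp
    subgoal using coord_FG_span by blast
    subgoal using coord_FG_lin_indep by blast
    done
qed

end
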